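(* Let $p$ be an odd prime, $\zeta$ a primitive $p$-th root of unity, $K=\mathbf{Q}_p(\zeta)$, $\mathfrak{o}=\mathbf{Z}_p[\zeta]$, and regard $\mathbf{Z}[\zeta]\subset\mathfrak{o}$ via the embedding $\mathbf{Q}(\zeta)\hookrightarrow K$ sending $\zeta$ to $\zeta$. If a global unit $u\in\mathbf{Z}[\zeta]^\times$ satisfies $u\equiv a\pmod{p\mathfrak{o}}$ for some $a\in\mathbf{Z}_p^\times$, then $u$ is a $p$-th power in $\mathfrak{o}^\times$. *)

theory Defs
  imports Complex_Main "HOL-Computational_Algebra.Polynomial"
begin

definition zeta :: "nat \<Rightarrow> complex" where
  "zeta p = cis (2 * pi / real p)"

definition Zz :: "nat \<Rightarrow> complex set" where
  "Zz p = {poly (map_poly of_int f) (zeta p) | f :: int poly. True}"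

definition congZ :: "nat \<Rightarrow> int \<Rightarrow> complex \<Rightarrow> complex \<Rightarrow> bool" where
  "congZ p m x y \<longleftrightarrow> (\<exists>w\<in>Zz p. x - y = of_int m * w)"

definition global_unit :: "nat \<Rightarrow> complex \<Rightarrow> bool" where
  "global_unit p u \<longleftrightarrow> u \<in> Zz p \<and> (\<exists>v\<in>Zz p. u * v = 1)"

(* The completion o = Z_p[zeta] = lim_n Z[zeta]/p^n Z[zeta], elements represented by
   compatible sequences w with w n taken modulo p^n. *)
definition o_elem :: "nat \<Rightarrow> (nat \<Rightarrow> complex) \<Rightarrow> bool" where
  "o_elem p w \<longleftrightarrow> (\<forall>n. w n \<in> Zz p) \<and> (\<forall>n. congZ p (int p ^ n) (w (Suc n)) (w n))"

definition o_eq :: "nat \<Rightarrow> (nat \<Rightarrow> complex) \<Rightarrow> (nat \<Rightarrow> complex) \<Rightarrow> bool" where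
  "o_eq p v w \<longleftrightarrow> (\<forall>n. congZ p (int p ^ n) (v n) (w n))"

definition o_unit :: "nat \<Rightarrow> (nat \<Rightarrow> complex) \<Rightarrow> bool" where
  "o_unit p w \<longleftrightarrow> (\<exists>v. o_elem p v \<and> o_eq p (\<lambda>n. w n * v n) (\<lambda>n. 1))"

(* Z_p = lim_n Z/p^n Z, elements as compatible integer sequences *)
definition Zp_elem :: "nat \<Rightarrow> (nat \<Rightarrow> int) \<Rightarrow> bool" where
  "Zp_elem p a \<longleftrightarrow> (\<forall>n. (int p ^ n) dvd (a (Suc n) - a n))"

definition Zp_unit :: "nat \<Rightarrow> (nat \<Rightarrow> int) \<Rightarrow> bool" where
  "Zp_unit p a \<longleftrightarrow> (\<exists>b. Zp_elem p b \<and> (\<forall>n. (int p ^ n) dvd (a n * b n - 1)))"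

end

theory Submission
  imports Defs "HOL-Computational_Algebra.Polynomial_Factorial" "HOL-Number_Theory.Cong"
begin

text \<open>The unit \<open>u / cnj u\<close> has all its conjugates
  on the unit circle and is \<open>\<equiv> 1 (mod p)\<close>; by Kronecker's coefficient bound it equals \<open>1\<close>, so \<open>u\<close> is
  real. For real \<open>u\<close> the congruence sharpens to \<open>u \<equiv> a' (mod p \<lambda>\<^sup>2)\<close> with \<open>\<lambda> = 1 - \<zeta>\<close>, and
  comparing norms gives \<open>\<plusminus>1 = Nm u \<equiv> a'\<^sup>p\<^sup>-\<^sup>1 (mod p\<^sup>2)\<close>; Fermat rules out the sign \<open>-1\<close>, hence
  \<open>u \<equiv> a'\<^sup>p (mod \<lambda>\<^sup>p\<^sup>+\<^sup>1)\<close>. Since \<open>p = \<epsilon> \<lambda>\<^sup>p\<^sup>-\<^sup>1\<close> for a unit \<open>\<epsilon>\<close>, one has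
  \<open>(1 + t \<lambda>\<^sup>m)\<^sup>p \<equiv> 1 + t \<epsilon> \<lambda>\<^sup>m\<^sup>+\<^sup>p\<^sup>-\<^sup>1 (mod \<lambda>\<^sup>m\<^sup>+\<^sup>p)\<close> for \<open>m \<ge> 2\<close>, which drives a Hensel iteration: every
  approximate root \<open>u \<equiv> y\<^sup>p (mod \<lambda>\<^sup>k)\<close> with \<open>k > p\<close> is improved by one power of \<open>\<lambda>\<close>. The approximations
  form a \<open>\<lambda>\<close>-adic Cauchy sequence, i.e. a \<open>p\<close>-th root of \<open>u\<close> in \<open>\<int>\<^sub>p[\<zeta>]\<close>.\<close>

section \<open>Integer polynomials evaluated at complex numbers\<close>

definition ipoly :: "int poly \<Rightarrow> complex \<Rightarrow> complex" where
  "ipoly f x = poly (map_poly of_int f) x"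

lemma map_poly_of_int_add:
  "map_poly (of_int :: int \<Rightarrow> 'a::ring_1) (f + g) = map_poly of_int f + map_poly of_int g"
  by (intro poly_eqI) (simp add: coeff_map_poly)

lemma map_poly_of_int_diff:
  "map_poly (of_int :: int \<Rightarrow> 'a::ring_1) (f - g) = map_poly of_int f - map_poly of_int g"
  by (intro poly_eqI) (simp add: coeff_map_poly)

lemma map_poly_of_int_mult:
  "map_poly (of_int :: int \<Rightarrow> 'a::comm_ring_1) (f * g) = map_poly of_int f * map_poly of_int g"
  by (intro poly_eqI) (simp add: coeff_map_poly coeff_mult)

lemma ipoly_0 [simp]: "ipoly 0 x = 0"
  by (simp add: ipoly_def)

lemma ipoly_add [simp]: "ipoly (f + g) x = ipoly f x + ipoly g x"
  by (simp add: ipoly_def map_poly_of_int_add)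

lemma ipoly_diff [simp]: "ipoly (f - g) x = ipoly f x - ipoly g x"
  by (simp add: ipoly_def map_poly_of_int_diff)

lemma ipoly_minus [simp]: "ipoly (- f) x = - ipoly f x"
  using ipoly_diff[of 0 f x] by (simp add: ipoly_def)

lemma ipoly_mult [simp]: "ipoly (f * g) x = ipoly f x * ipoly g x"
  by (simp add: ipoly_def map_poly_of_int_mult)

lemma ipoly_pCons [simp]: "ipoly (pCons a f) x = of_int a + x * ipoly f x"
  by (simp add: ipoly_def map_poly_pCons)

lemma ipoly_const [simp]: "ipoly [:c:] x = of_int c"
  by (simp add: ipoly_def map_poly_pCons)

lemma ipoly_of_int [simp]: "ipoly (of_int c) x = of_int c"
  by (simp add: of_int_poly)

lemma ipoly_1 [simp]: "ipoly 1 x = 1"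
  using ipoly_of_int[of 1] by simp

lemma ipoly_smult [simp]: "ipoly (smult c f) x = of_int c * ipoly f x"
  by (simp add: ipoly_def map_poly_smult)

lemma ipoly_monom [simp]: "ipoly (monom c n) x = of_int c * x ^ n"
  by (simp add: ipoly_def map_poly_monom poly_monom)

lemma ipoly_sum: "ipoly (\<Sum>i\<in>A. F i) x = (\<Sum>i\<in>A. ipoly (F i) x)"
  by (induction A rule: infinite_finite_induct) auto

lemma ipoly_pcompose: "ipoly (pcompose f g) x = ipoly f (ipoly g x)"
  by (induction f) (auto simp: pcompose_pCons)

lemma ipoly_cnj: "cnj (ipoly f x) = ipoly f (cnj x)"
  by (induction f) auto

lemma ipoly_eq_sum_coeff:
  assumes "degree f < n"
  shows "ipoly f x = (\<Sum>k<n. of_int (coeff f k) * x ^ k)"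
proof -
  have "ipoly f x = (\<Sum>k\<le>degree f. of_int (coeff f k) * x ^ k)"
    unfolding ipoly_def by (subst poly_altdef) (simp add: coeff_map_poly degree_map_poly)
  also have "\<dots> = (\<Sum>k<n. of_int (coeff f k) * x ^ k)"
    using assms by (intro sum.mono_neutral_left) (auto simp: coeff_eq_0)
  finally show ?thesis .
qed

section \<open>Eisenstein's criterion\<close>

lemma eisenstein_aux:
  fixes F G H :: "int poly" and q :: int
  assumes q: "prime q" and F: "F = G * H"
    and low: "\<And>k. k < degree F \<Longrightarrow> q dvd coeff F k"
    and lead: "\<not> q dvd lead_coeff F"
    and G0: "q dvd coeff G 0" and H0: "\<not> q dvd coeff H 0"
  shows "degree H = 0"
proof (rule ccontr)
  assume dH: "degree H \<noteq> 0"
  have "G \<noteq> 0" "H \<noteq> 0" using lead F by auto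
  have "\<not> q dvd lead_coeff G" using lead F by (metis dvd_mult2 lead_coeff_mult)
  hence ex: "\<exists>i. \<not> q dvd coeff G i" by blast
  define i where "i = (LEAST i. \<not> q dvd coeff G i)"
  have Gi: "\<not> q dvd coeff G i" unfolding i_def by (rule LeastI_ex[OF ex])
  have below: "q dvd coeff G k" if "k < i" for k using that not_less_Least i_def by blast
  have "i \<le> degree G" using Gi by (intro le_degree) auto
  with dH \<open>G \<noteq> 0\<close> \<open>H \<noteq> 0\<close> have "i < degree F"
    by (simp add: F degree_mult_eq)
  hence "q dvd coeff F i" by (rule low)
  moreover have "coeff F i = coeff G i * coeff H 0 + (\<Sum>k<i. coeff G k * coeff H (i - k))"
  proof -
    have "{..i} = insert i {..<i}" by auto
    thus ?thesis by (simp add: F coeff_mult)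
  qed
  moreover have "q dvd (\<Sum>k<i. coeff G k * coeff H (i - k))"
    by (intro dvd_sum) (simp add: below)
  ultimately have "q dvd coeff G i * coeff H 0" by (simp add: dvd_add_left_iff)
  thus False using q Gi H0 by (simp add: prime_dvd_mult_iff)
qed

lemma eisenstein:
  fixes F G H :: "int poly" and q :: int
  assumes q: "prime q" and F: "F = G * H"
    and low: "\<And>k. k < degree F \<Longrightarrow> q dvd coeff F k"
    and lead: "\<not> q dvd lead_coeff F"
    and const: "\<not> q ^ 2 dvd coeff F 0"
  shows "degree G = 0 \<or> degree H = 0"
proof (cases "degree F = 0")
  case True
  moreover have "G \<noteq> 0" "H \<noteq> 0" using lead F by auto
  ultimately show ?thesis by (simp add: F degree_mult_eq)
next
  case False
  hence "q dvd coeff G 0 * coeff H 0" using low[of 0] by (simp add: F coeff_mult_0)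
  hence "q dvd coeff G 0 \<or> q dvd coeff H 0" using q by (simp add: prime_dvd_mult_iff)
  moreover have "\<not> (q dvd coeff G 0 \<and> q dvd coeff H 0)"
  proof
    assume "q dvd coeff G 0 \<and> q dvd coeff H 0"
    hence "q ^ 2 dvd coeff G 0 * coeff H 0" by (simp add: power2_eq_square mult_dvd_mono)
    thus False using const by (simp add: F coeff_mult_0)
  qed
  moreover have "degree H = 0" if "q dvd coeff G 0" "\<not> q dvd coeff H 0"
    using q F low lead that by (rule eisenstein_aux)
  moreover have "degree G = 0" if "q dvd coeff H 0" "\<not> q dvd coeff G 0"
    using q _ low lead that by (rule eisenstein_aux) (simp add: F mult.commute)
  ultimately show ?thesis by argo
qed

section \<open>Fermat's little theorem for integers\<close>

lemma prime_dvd_power_self_diff_nat: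
  assumes "prime p"
  shows "int p dvd int n ^ p - int n"
proof (induction n)
  case 0
  show ?case using assms prime_gt_0_nat by (simp add: zero_power)
next
  case (Suc n)
  define S where "S = (\<Sum>k\<in>{1..<p}. of_nat (p choose k) * int n ^ k)"
  have "{..p} = insert 0 (insert p {1..<p})" using prime_ge_2_nat[OF assms] by auto
  hence "(int n + 1) ^ p = 1 + int n ^ p + S"
    using prime_ge_2_nat[OF assms] by (simp add: binomial_ring S_def)
  hence "(int n + 1) ^ p - (int n + 1) = (int n ^ p - int n) + S" by linarith
  moreover have "int p dvd S"
    unfolding S_def using dvd_choose_prime assms by (intro dvd_sum) (simp add: int_dvd_int_iff)
  ultimately have "int p dvd (int n + 1) ^ p - (int n + 1)" using Suc by (metis dvd_add)
  thus ?case by (metis of_nat_Suc add.commute)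
qed

lemma fermat_theorem_int:
  fixes a :: int
  assumes "prime p" and "\<not> int p dvd a"
  shows "int p dvd a ^ (p - 1) - 1"
proof -
  have p: "p = Suc (p - 1)" using assms(1) prime_gt_0_nat by simp
  define b where "b = nat (a mod int p)"
  have b: "int b = a mod int p" using prime_gt_0_nat[OF assms(1)] by (simp add: b_def)
  have "[a = int b] (mod int p)" by (simp add: b cong_def)
  hence "[a ^ p - a = int b ^ p - int b] (mod int p)" by (intro cong_diff cong_pow)
  hence "int p dvd a ^ p - a"
    using prime_dvd_power_self_diff_nat[OF assms(1), of b] cong_dvd_iff by blast
  also have "a ^ p - a = a * (a ^ (p - 1) - 1)"
    by (subst p) (simp add: algebra_simps)
  finally show ?thesis using assms prime_dvd_mult_iff[of "int p"] by simp
qed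

section \<open>The cyclotomic integers \<open>\<int>[\<zeta>]\<close> for an odd prime \<open>p\<close>\<close>

locale odd_prime =
  fixes p :: nat
  assumes prime_p: "prime p" and odd_p: "odd p"
begin

abbreviation \<zeta> :: complex where "\<zeta> \<equiv> zeta p"
abbreviation ZZ :: "complex set" where "ZZ \<equiv> Zz p"
abbreviation J :: "nat set" where "J \<equiv> {1..<p}"

lemma p_ge_3: "p \<ge> 3"
proof -
  have "p \<ge> 2" using prime_p prime_ge_2_nat by blast
  moreover have "p \<noteq> 2" using odd_p by auto
  ultimately show ?thesis by linarith
qed

lemma p_pos: "p > 0"
  using p_ge_3 by simp

lemma prime_int_p: "prime (int p)"
  using prime_p by simp

lemma J_not_dvd: "j \<in> J \<Longrightarrow> \<not> p dvd j"
  by (auto dest: dvd_imp_le)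

lemma not_dvd_2: "\<not> int p dvd 2"
proof
  assume "int p dvd 2"
  hence "p dvd 2" by (metis of_nat_dvd_iff of_nat_numeral)
  thus False using p_ge_3 by (auto dest: dvd_imp_le)
qed

lemma zeta_pow: "\<zeta> ^ k = cis (2 * pi * real k / real p)"
  by (simp add: zeta_def DeMoivre mult_ac)

lemma zeta_pow_p: "\<zeta> ^ p = 1"
proof -
  have "\<zeta> ^ p = cis (2 * pi)" using p_pos by (simp add: zeta_pow)
  also have "\<dots> = 1" by (simp add: complex_eq_iff)
  finally show ?thesis .
qed

lemma zeta_pow_mod: "\<zeta> ^ k = \<zeta> ^ (k mod p)"
proof -
  have "\<zeta> ^ k = \<zeta> ^ (p * (k div p) + k mod p)" by simp
  also have "\<dots> = (\<zeta> ^ p) ^ (k div p) * \<zeta> ^ (k mod p)"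
    by (simp only: power_add power_mult)
  also have "\<dots> = \<zeta> ^ (k mod p)" by (simp add: zeta_pow_p)
  finally show ?thesis .
qed

lemma zeta_pow_inj: "i < p \<Longrightarrow> j < p \<Longrightarrow> \<zeta> ^ i = \<zeta> ^ j \<Longrightarrow> i = j"
  using bij_betw_roots_unity[OF p_pos] unfolding bij_betw_def inj_on_def
  by (auto simp: zeta_pow)

lemma zeta_pow_eq_iff: "\<zeta> ^ i = \<zeta> ^ j \<longleftrightarrow> i mod p = j mod p"
proof
  assume "\<zeta> ^ i = \<zeta> ^ j"
  hence "\<zeta> ^ (i mod p) = \<zeta> ^ (j mod p)" using zeta_pow_mod by metis
  thus "i mod p = j mod p" using zeta_pow_inj p_pos by auto
next
  assume "i mod p = j mod p"
  thus "\<zeta> ^ i = \<zeta> ^ j" using zeta_pow_mod by metis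
qed

lemma zeta_pow_eq_1_iff: "\<zeta> ^ k = 1 \<longleftrightarrow> p dvd k"
  using zeta_pow_eq_iff[of k 0] by (simp add: dvd_eq_mod_eq_0)

lemma zeta_neq_1: "\<zeta> \<noteq> 1"
  using zeta_pow_eq_1_iff[of 1] p_ge_3 by auto

lemma norm_zeta_pow [simp]: "norm (\<zeta> ^ k) = 1"
  by (simp add: zeta_pow)

lemma cnj_zeta_pow: "cnj (\<zeta> ^ k) = \<zeta> ^ ((p - 1) * k)"
proof -
  have "\<zeta> ^ k * \<zeta> ^ ((p - 1) * k) = \<zeta> ^ (p * k)"
    using p_pos by (simp add: power_add[symmetric] algebra_simps)
  also have "\<dots> = 1" by (simp add: power_mult zeta_pow_p)
  finally have 1: "\<zeta> ^ k * \<zeta> ^ ((p - 1) * k) = 1" .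
  have 2: "\<zeta> ^ k * cnj (\<zeta> ^ k) = 1"
    using complex_norm_square[of "\<zeta>^k"] by simp
  from 1 2 show ?thesis
    by (metis mult_cancel_left2 mult.commute mult.left_commute)
qed

lemma sum_zeta_pow_eq_0: "\<not> p dvd k \<Longrightarrow> (\<Sum>j<p. \<zeta> ^ (k * j)) = 0"
proof -
  assume "\<not> p dvd k"
  hence ne: "\<zeta> ^ k \<noteq> 1" using zeta_pow_eq_1_iff by simp
  have "(\<Sum>j<p. \<zeta> ^ (k * j)) = (\<Sum>j<p. (\<zeta> ^ k) ^ j)" by (simp add: power_mult)
  also have "\<dots> = ((\<zeta> ^ k) ^ p - 1) / (\<zeta> ^ k - 1)" using ne by (simp add: geometric_sum)
  also have "(\<zeta> ^ k) ^ p = 1"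
    by (simp add: power_mult[symmetric] mult.commute[of k] power_mult zeta_pow_p)
  finally show ?thesis by simp
qed

lemma sum_J_zeta_pow: "(\<Sum>j\<in>J. \<zeta> ^ (j * m)) = (if p dvd m then of_nat p - 1 else -1)"
proof -
  have "{..<p} = insert 0 J" using p_pos by auto
  hence split: "(\<Sum>j<p. \<zeta> ^ (j * m)) = 1 + (\<Sum>j\<in>J. \<zeta> ^ (j * m))" by simp
  show ?thesis
  proof (cases "p dvd m")
    case True
    hence "\<And>j. \<zeta> ^ (j * m) = 1" by (simp add: zeta_pow_eq_1_iff)
    thus ?thesis using True p_pos by simp
  next
    case False
    with sum_zeta_pow_eq_0[of m] split have "1 + (\<Sum>j\<in>J. \<zeta> ^ (j * m)) = 0"
      by (simp add: mult.commute)
    thus ?thesis using False by (simp add: eq_neg_iff_add_eq_0 add.commute)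
  qed
qed

lemma ZZ_iff: "x \<in> ZZ \<longleftrightarrow> (\<exists>f. x = ipoly f \<zeta>)"
  by (simp add: Zz_def ipoly_def)

lemma ZZ_ipoly [simp, intro]: "ipoly f \<zeta> \<in> ZZ"
  using ZZ_iff by blast

lemma ZZ_add [intro]: "x \<in> ZZ \<Longrightarrow> y \<in> ZZ \<Longrightarrow> x + y \<in> ZZ"
  by (metis ZZ_iff ipoly_add)

lemma ZZ_diff [intro]: "x \<in> ZZ \<Longrightarrow> y \<in> ZZ \<Longrightarrow> x - y \<in> ZZ"
  by (metis ZZ_iff ipoly_diff)

lemma ZZ_mult [intro]: "x \<in> ZZ \<Longrightarrow> y \<in> ZZ \<Longrightarrow> x * y \<in> ZZ"
  by (metis ZZ_iff ipoly_mult)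

lemma ZZ_minus [intro]: "x \<in> ZZ \<Longrightarrow> - x \<in> ZZ"
  by (metis ZZ_iff ipoly_minus)

lemma ZZ_of_int [simp, intro]: "of_int n \<in> ZZ"
  by (metis ZZ_ipoly ipoly_const)

lemma ZZ_of_nat [simp, intro]: "of_nat n \<in> ZZ"
  by (metis ZZ_of_int of_int_of_nat_eq)

lemma ZZ_0 [simp, intro]: "0 \<in> ZZ"
  using ZZ_of_int[of 0] by simp

lemma ZZ_1 [simp, intro]: "1 \<in> ZZ"
  using ZZ_of_int[of 1] by simp

lemma ZZ_power [intro]: "x \<in> ZZ \<Longrightarrow> x ^ n \<in> ZZ"
  by (induction n) auto

lemma ZZ_zeta [simp, intro]: "\<zeta> \<in> ZZ"
  using ZZ_ipoly[of "monom 1 1"] by simp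

lemma ZZ_zeta_pow [simp, intro]: "\<zeta> ^ n \<in> ZZ"
  using ZZ_power ZZ_zeta by blast

lemma ZZ_sum [intro]: "(\<And>i. i \<in> A \<Longrightarrow> F i \<in> ZZ) \<Longrightarrow> sum F A \<in> ZZ"
  by (induction A rule: infinite_finite_induct) auto

lemma ZZ_prod [intro]: "(\<And>i. i \<in> A \<Longrightarrow> F i \<in> ZZ) \<Longrightarrow> prod F A \<in> ZZ"
  by (induction A rule: infinite_finite_induct) auto

lemma ZZ_ipoly_at: "x \<in> ZZ \<Longrightarrow> ipoly f x \<in> ZZ"
  by (induction f) auto

lemma ZZ_cnj [intro]: "x \<in> ZZ \<Longrightarrow> cnj x \<in> ZZ"
proof -
  assume "x \<in> ZZ"
  then obtain f where "x = ipoly f \<zeta>" using ZZ_iff by blast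
  hence "cnj x = ipoly f (\<zeta> ^ (p - 1))" using ipoly_cnj cnj_zeta_pow[of 1] by simp
  thus ?thesis using ZZ_ipoly_at by simp
qed

subsection \<open>The cyclotomic polynomial\<close>

definition cyclo :: "int poly" where
  "cyclo = (\<Sum>k<p. monom 1 k)"

lemma coeff_cyclo: "coeff cyclo k = (if k < p then 1 else 0)"
  by (simp add: cyclo_def coeff_sum)

lemma degree_cyclo: "degree cyclo = p - 1"
proof (rule antisym)
  show "degree cyclo \<le> p - 1"
    by (rule degree_le) (use p_pos in \<open>auto simp: coeff_cyclo\<close>)
  show "p - 1 \<le> degree cyclo" by (rule le_degree) (simp add: coeff_cyclo p_pos)
qed

lemma lead_coeff_cyclo: "lead_coeff cyclo = 1"
  by (simp add: degree_cyclo coeff_cyclo p_pos)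

lemma cyclo_neq_0: "cyclo \<noteq> 0"
  using lead_coeff_cyclo by auto

lemma ipoly_cyclo: "ipoly cyclo x = (\<Sum>k<p. x ^ k)"
  by (simp add: cyclo_def ipoly_sum)

lemma ipoly_cyclo_zeta_pow: "\<not> p dvd j \<Longrightarrow> ipoly cyclo (\<zeta> ^ j) = 0"
  using sum_zeta_pow_eq_0[of j] by (simp add: ipoly_cyclo power_mult)

lemma ipoly_cyclo_zeta: "ipoly cyclo \<zeta> = 0"
  using ipoly_cyclo_zeta_pow[of 1] p_ge_3 by simp

lemma geometric_sum_monom: "(\<Sum>k<n. monom (1::int) k) * [:-1, 1:] = monom 1 n - 1"
proof (induction n)
  case (Suc n)
  have "monom (1::int) n * [:-1, 1:] = monom 1 (Suc n) - monom 1 n"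
  proof -
    have "[:-1, 1:] = monom (1::int) 1 - 1" by (simp add: monom_Suc monom_0 one_pCons)
    thus ?thesis by (simp add: algebra_simps mult_monom monom_Suc)
  qed
  hence "(\<Sum>k<Suc n. monom (1::int) k) * [:-1, 1:] = (monom 1 n - 1) + (monom 1 (Suc n) - monom 1 n)"
    by (simp only: sum.lessThan_Suc distrib_right Suc)
  thus ?case by simp
qed simp

lemma coeff_cyclo_shift: "coeff (pcompose cyclo [:1, 1:]) k = int (p choose Suc k)"
proof -
  define F where "F = pcompose cyclo [:1, 1:]"
  have "pcompose (monom 1 p) q = q ^ p" for q :: "int poly"
    by (induction p) (auto simp: monom_Suc pcompose_pCons monom_0 one_pCons)
  hence "F * [:0, 1:] = [:1, 1:] ^ p - 1"
    using arg_cong[OF geometric_sum_monom[of p, folded cyclo_def], of "\<lambda>f. pcompose f [:1, 1:]"]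
    by (simp add: F_def pcompose_mult pcompose_diff pcompose_pCons pcompose_1)
  moreover have "coeff F k = coeff (F * [:0, 1:]) (Suc k)" by (simp add: mult.commute[of F])
  ultimately have "coeff F k = coeff ([:1, 1:] ^ p - 1 :: int poly) (Suc k)" by simp
  also have "\<dots> = int (p choose Suc k)"
  proof (cases "Suc k \<le> p")
    case False
    hence "coeff ([:1, 1:] ^ p :: int poly) (Suc k) = 0"
      by (intro coeff_eq_0) (simp add: degree_linear_power)
    thus ?thesis using False by simp
  qed (simp add: coeff_linear_poly_power)
  finally show ?thesis by (simp add: F_def)
qed

lemma cyclo_irreducible: "irreducible cyclo"
proof (rule irreducibleI)
  show "cyclo \<noteq> 0" by (rule cyclo_neq_0)
  show "\<not> is_unit cyclo"
    using degree_cyclo p_ge_3 by (auto simp: is_unit_poly_iff)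
  fix g h assume gh: "cyclo = g * h"
  let ?F = "pcompose cyclo [:1, 1:]"
  have deg_F: "degree ?F = p - 1" by (simp add: degree_pcompose degree_cyclo)
  have "degree (pcompose g [:1, 1:]) = 0 \<or> degree (pcompose h [:1, 1:]) = 0"
  proof (rule eisenstein[OF prime_int_p])
    show "?F = pcompose g [:1, 1:] * pcompose h [:1, 1:]" by (simp add: gh pcompose_mult)
    show "int p dvd coeff ?F k" if "k < degree ?F" for k
    proof -
      have "p dvd (p choose Suc k)" using that deg_F dvd_choose_prime prime_p by simp
      thus ?thesis by (simp add: coeff_cyclo_shift)
    qed
    show "\<not> int p dvd lead_coeff ?F"
      using p_ge_3 by (simp add: deg_F coeff_cyclo_shift)
    show "\<not> int p ^ 2 dvd coeff ?F 0"
    proof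
      assume "int p ^ 2 dvd coeff ?F 0"
      hence "int p * int p dvd int p * 1"
        using coeff_cyclo_shift[of 0] by (simp add: power2_eq_square)
      thus False using p_ge_3 by (subst (asm) dvd_times_left_cancel_iff) auto
    qed
  qed
  hence "degree g = 0 \<or> degree h = 0" by (simp add: degree_pcompose)
  moreover have "lead_coeff g * lead_coeff h = 1"
    using gh lead_coeff_cyclo by (simp add: lead_coeff_mult)
  hence "lead_coeff g dvd 1" "lead_coeff h dvd 1"
    by (metis dvdI mult.commute)+
  ultimately show "is_unit g \<or> is_unit h"
    by (metis degree_eq_zeroE is_unit_poly_iff lead_coeff_pCons(2) pCons_0_0)
qed

lemma dvd_cyclo_if_min_degree_root:
  fixes g :: "int poly"
  assumes "g \<noteq> 0" "content g = 1" "ipoly g \<zeta> = 0"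
    and min: "\<And>h. h \<noteq> 0 \<Longrightarrow> ipoly h \<zeta> = 0 \<Longrightarrow> degree g \<le> degree h"
  shows "g dvd cyclo"
proof -
  obtain q r where qr: "pseudo_divmod cyclo g = (q, r)" by (cases "pseudo_divmod cyclo g") auto
  define a where "a = lead_coeff g ^ (Suc (degree cyclo) - degree g)"
  have eq: "smult a cyclo = g * q + r" and deg_r: "r = 0 \<or> degree r < degree g"
    using pseudo_divmod[OF \<open>g \<noteq> 0\<close> qr] by (auto simp: a_def)
  have "ipoly (smult a cyclo) \<zeta> = ipoly (g * q + r) \<zeta>" using eq by simp
  hence "ipoly r \<zeta> = 0" using assms(3) ipoly_cyclo_zeta by simp
  have "r = 0"
  proof (rule ccontr)
    assume "r \<noteq> 0"
    hence "degree g \<le> degree r" using min \<open>ipoly r \<zeta> = 0\<close> by blast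
    thus False using deg_r \<open>r \<noteq> 0\<close> by simp
  qed
  hence "fract_poly g dvd fract_poly (smult a cyclo)" using eq by (simp add: fract_poly_dvd)
  moreover have "a \<noteq> 0" using \<open>g \<noteq> 0\<close> by (simp add: a_def)
  ultimately have "fract_poly g dvd fract_poly cyclo" by (simp add: dvd_smult_iff)
  thus ?thesis using assms(2) by (rule fract_poly_dvdD)
qed

lemma degree_ge_if_root:
  assumes "g \<noteq> 0" "ipoly g \<zeta> = 0"
  shows "degree g \<ge> p - 1"
proof -
  define P where "P d \<longleftrightarrow> (\<exists>g. g \<noteq> 0 \<and> ipoly g \<zeta> = 0 \<and> degree g = d)" for d
  have "P (degree g)" using assms unfolding P_def by blast
  define m where "m = (LEAST d. P d)"
  have "P m" unfolding m_def by (rule LeastI) fact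
  then obtain g0 where g0: "g0 \<noteq> 0" "ipoly g0 \<zeta> = 0" "degree g0 = m"
    unfolding P_def by blast
  have min: "m \<le> degree h" if "h \<noteq> 0" "ipoly h \<zeta> = 0" for h
    unfolding m_def by (rule Least_le) (use that in \<open>auto simp: P_def\<close>)
  define g' where "g' = primitive_part g0"
  have "ipoly g0 \<zeta> = of_int (content g0) * ipoly g' \<zeta>"
    by (metis g'_def content_times_primitive_part ipoly_smult)
  hence g'_root: "ipoly g' \<zeta> = 0" using g0 by simp
  have g': "g' \<noteq> 0" "degree g' = m" "content g' = 1"
    using g0 by (auto simp: g'_def)
  have "g' dvd cyclo"
    using g' g'_root min by (intro dvd_cyclo_if_min_degree_root) auto
  then obtain h where h: "cyclo = g' * h" by (elim dvdE)
  hence "is_unit g' \<or> is_unit h" using cyclo_irreducible irreducibleD by blast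
  moreover have "\<not> is_unit g'"
  proof
    assume "is_unit g'"
    then obtain c where "g' = [:c:]" using is_unit_poly_iff by blast
    thus False using g'_root g'(1) by simp
  qed
  ultimately obtain c where "h = [:c:]" "c dvd 1" using is_unit_poly_iff by blast
  hence "degree cyclo = degree g'" using h by auto
  thus ?thesis using min[OF assms] g'(2) degree_cyclo by simp
qed

lemma cyclo_division: "\<exists>q r. f = cyclo * q + r \<and> degree r < p - 1"
proof -
  obtain q r where qr: "pseudo_divmod f cyclo = (q, r)" by (cases "pseudo_divmod f cyclo") auto
  have "smult 1 f = cyclo * q + r" "r = 0 \<or> degree r < degree cyclo"
    using pseudo_divmod[OF cyclo_neq_0 qr] lead_coeff_cyclo by auto
  thus ?thesis using degree_cyclo p_ge_3 by (intro exI[of _ q] exI[of _ r]) auto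
qed

lemma cyclo_dvd_if_root:
  assumes "ipoly f \<zeta> = 0"
  shows "cyclo dvd f"
proof -
  obtain q r where f: "f = cyclo * q + r" and r: "degree r < p - 1"
    using cyclo_division by blast
  have "ipoly r \<zeta> = 0" using assms ipoly_cyclo_zeta by (simp add: f)
  hence "r = 0" using degree_ge_if_root[of r] r by (meson not_le)
  thus ?thesis by (simp add: f)
qed

lemma ipoly_zeta_pow_eq:
  assumes "ipoly f \<zeta> = ipoly g \<zeta>" "\<not> p dvd j"
  shows "ipoly f (\<zeta> ^ j) = ipoly g (\<zeta> ^ j)"
proof -
  obtain h where "f - g = cyclo * h" using cyclo_dvd_if_root[of "f - g"] assms(1) by auto
  hence "ipoly (f - g) (\<zeta> ^ j) = 0" using ipoly_cyclo_zeta_pow[OF assms(2)] by simp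
  thus ?thesis by simp
qed

lemma ex_reduced_rep: "\<exists>g. degree g < p - 1 \<and> ipoly g \<zeta> = ipoly f \<zeta>"
proof -
  obtain q r where "f = cyclo * q + r" "degree r < p - 1" using cyclo_division by blast
  moreover from this have "ipoly r \<zeta> = ipoly f \<zeta>" using ipoly_cyclo_zeta by simp
  ultimately show ?thesis by blast
qed

lemma reduced_rep_unique:
  assumes "degree g1 < p - 1" "degree g2 < p - 1" "ipoly g1 \<zeta> = ipoly g2 \<zeta>"
  shows "g1 = g2"
proof (rule ccontr)
  assume "g1 \<noteq> g2"
  hence "g1 - g2 \<noteq> 0" by simp
  moreover have "ipoly (g1 - g2) \<zeta> = 0" using assms(3) by simp
  ultimately have "degree (g1 - g2) \<ge> p - 1" by (rule degree_ge_if_root)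
  moreover have "degree (g1 - g2) \<le> max (degree g1) (degree g2)" by (rule degree_diff_le_max)
  ultimately show False using assms by simp
qed

subsection \<open>The embeddings \<open>\<zeta> \<mapsto> \<zeta> ^ j\<close>\<close>

text \<open>For \<open>p \<nmid> j\<close> the
  result does not depend on the representative, because any two differ by a multiple of
  \<open>cyclo\<close>; for \<open>p dvd j\<close> the value is meaningless.\<close>

definition rep :: "complex \<Rightarrow> int poly" where
  "rep x = (SOME f. x = ipoly f \<zeta>)"

definition \<sigma> :: "nat \<Rightarrow> complex \<Rightarrow> complex" where
  "\<sigma> j x = ipoly (rep x) (\<zeta> ^ j)"

lemma ipoly_rep: "x \<in> ZZ \<Longrightarrow> x = ipoly (rep x) \<zeta>"
  unfolding rep_def using ZZ_iff by (metis (mono_tags) someI_ex)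

lemma sigma_ipoly: "x = ipoly f \<zeta> \<Longrightarrow> \<not> p dvd j \<Longrightarrow> \<sigma> j x = ipoly f (\<zeta> ^ j)"
  unfolding \<sigma>_def using ipoly_rep[of x] ipoly_zeta_pow_eq by (metis ZZ_ipoly)

lemma sigma_add:
  assumes "x \<in> ZZ" "y \<in> ZZ" "\<not> p dvd j"
  shows "\<sigma> j (x + y) = \<sigma> j x + \<sigma> j y"
proof -
  obtain f g where f: "x = ipoly f \<zeta>" "y = ipoly g \<zeta>" using assms ZZ_iff by blast
  thus ?thesis
    using sigma_ipoly[OF f(1) assms(3)] sigma_ipoly[OF f(2) assms(3)] sigma_ipoly[of "x + y" "f + g"] assms(3)
    by simp
qed

lemma sigma_diff:
  assumes "x \<in> ZZ" "y \<in> ZZ" "\<not> p dvd j"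
  shows "\<sigma> j (x - y) = \<sigma> j x - \<sigma> j y"
proof -
  obtain f g where f: "x = ipoly f \<zeta>" "y = ipoly g \<zeta>" using assms ZZ_iff by blast
  thus ?thesis
    using sigma_ipoly[OF f(1) assms(3)] sigma_ipoly[OF f(2) assms(3)] sigma_ipoly[of "x - y" "f - g"] assms(3)
    by simp
qed

lemma sigma_mult:
  assumes "x \<in> ZZ" "y \<in> ZZ" "\<not> p dvd j"
  shows "\<sigma> j (x * y) = \<sigma> j x * \<sigma> j y"
proof -
  obtain f g where f: "x = ipoly f \<zeta>" "y = ipoly g \<zeta>" using assms ZZ_iff by blast
  thus ?thesis
    using sigma_ipoly[OF f(1) assms(3)] sigma_ipoly[OF f(2) assms(3)] sigma_ipoly[of "x * y" "f * g"] assms(3)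
    by simp
qed

lemma sigma_of_int [simp]: "\<not> p dvd j \<Longrightarrow> \<sigma> j (of_int n) = of_int n"
  using sigma_ipoly[of "of_int n" "[:n:]"] by simp

lemma sigma_of_nat [simp]: "\<not> p dvd j \<Longrightarrow> \<sigma> j (of_nat n) = of_nat n"
  using sigma_of_int[of j "int n"] by simp

lemma sigma_0 [simp]: "\<not> p dvd j \<Longrightarrow> \<sigma> j 0 = 0"
  using sigma_of_int[of j 0] by simp

lemma sigma_1 [simp]: "\<not> p dvd j \<Longrightarrow> \<sigma> j 1 = 1"
  using sigma_of_int[of j 1] by simp

lemma sigma_zeta_pow: "\<not> p dvd j \<Longrightarrow> \<sigma> j (\<zeta> ^ k) = \<zeta> ^ (j * k)"
  using sigma_ipoly[of "\<zeta> ^ k" "monom 1 k"] by (simp add: power_mult)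

lemma ZZ_sigma [intro]: "\<sigma> j x \<in> ZZ"
  unfolding \<sigma>_def by (rule ZZ_ipoly_at) auto

lemma sigma_mod: "\<sigma> j x = \<sigma> (j mod p) x"
  unfolding \<sigma>_def using zeta_pow_mod by metis

lemma sigma_sigma:
  assumes "x \<in> ZZ" "\<not> p dvd j" "\<not> p dvd k"
  shows "\<sigma> k (\<sigma> j x) = \<sigma> (k * j) x"
proof -
  obtain f where f: "x = ipoly f \<zeta>" using assms ZZ_iff by blast
  have "\<sigma> j x = ipoly f (\<zeta> ^ j)" using sigma_ipoly[OF f assms(2)] .
  also have "\<dots> = ipoly (pcompose f (monom 1 j)) \<zeta>" by (simp add: ipoly_pcompose)
  finally have "\<sigma> k (\<sigma> j x) = ipoly (pcompose f (monom 1 j)) (\<zeta> ^ k)"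
    using sigma_ipoly assms(3) by blast
  also have "\<dots> = ipoly f (\<zeta> ^ (k * j))" by (simp add: ipoly_pcompose power_mult)
  also have "\<not> p dvd k * j" using assms prime_p by (simp add: prime_dvd_mult_iff)
  hence "ipoly f (\<zeta> ^ (k * j)) = \<sigma> (k * j) x" using sigma_ipoly[OF f] by simp
  finally show ?thesis .
qed

lemma sigma_cnj:
  assumes "x \<in> ZZ" "\<not> p dvd j"
  shows "\<sigma> j (cnj x) = cnj (\<sigma> j x)"
proof -
  obtain f where f: "x = ipoly f \<zeta>" using assms ZZ_iff by blast
  have "cnj x = ipoly f (\<zeta> ^ (p - 1))"
    using f ipoly_cnj cnj_zeta_pow[of 1] by (metis mult.right_neutral power_one_right)
  also have "\<dots> = ipoly (pcompose f (monom 1 (p - 1))) \<zeta>" by (simp add: ipoly_pcompose)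
  finally have "\<sigma> j (cnj x) = ipoly (pcompose f (monom 1 (p - 1))) (\<zeta> ^ j)"
    using sigma_ipoly assms(2) by blast
  also have "\<dots> = ipoly f ((\<zeta> ^ j) ^ (p - 1))" by (simp add: ipoly_pcompose)
  also have "(\<zeta> ^ j) ^ (p - 1) = cnj (\<zeta> ^ j)"
    using cnj_zeta_pow[of j] by (simp add: power_mult mult.commute)
  also have "ipoly f (cnj (\<zeta> ^ j)) = cnj (\<sigma> j x)"
    using sigma_ipoly[OF f assms(2)] by (simp add: ipoly_cnj)
  finally show ?thesis .
qed

lemma sigma_sum:
  assumes "\<And>i. i \<in> A \<Longrightarrow> F i \<in> ZZ" "\<not> p dvd j"
  shows "\<sigma> j (sum F A) = (\<Sum>i\<in>A. \<sigma> j (F i))"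
  using assms(1)
proof (induction A rule: infinite_finite_induct)
  case (insert a A)
  have "sum F A \<in> ZZ" using insert.prems by (intro ZZ_sum) auto
  thus ?case using insert assms(2) by (simp add: sigma_add)
qed (use assms in auto)

lemma sigma_prod:
  assumes "\<And>i. i \<in> A \<Longrightarrow> F i \<in> ZZ" "\<not> p dvd j"
  shows "\<sigma> j (prod F A) = (\<Prod>i\<in>A. \<sigma> j (F i))"
  using assms(1)
proof (induction A rule: infinite_finite_induct)
  case (insert a A)
  have "prod F A \<in> ZZ" using insert.prems by (intro ZZ_prod) auto
  thus ?case using insert assms(2) by (simp add: sigma_mult)
qed (use assms in auto)

lemma bij_betw_mult_mod_J:
  assumes "\<not> p dvd k"
  shows "bij_betw (\<lambda>j. (k * j) mod p) J J"
proof -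
  have inj: "inj_on (\<lambda>j. (k * j) mod p) J"
  proof (rule inj_onI)
    fix i j assume ij: "i \<in> J" "j \<in> J" "(k * i) mod p = (k * j) mod p"
    hence "int (k * i) mod int p = int (k * j) mod int p" by (metis of_nat_mod)
    hence "int p dvd int k * (int i - int j)" by (simp add: mod_eq_dvd_iff algebra_simps)
    moreover have "\<not> int p dvd int k" using assms by simp
    ultimately have "int p dvd int i - int j" using prime_int_p by (simp add: prime_dvd_mult_iff)
    moreover have "\<bar>int i - int j\<bar> < int p" using ij by auto
    ultimately have "int i - int j = 0"
      using dvd_imp_le_int[of "int i - int j" "int p"] by fastforce
    thus "i = j" by simp
  qed
  have sub: "(\<lambda>j. (k * j) mod p) ` J \<subseteq> J"
  proof
    fix x assume "x \<in> (\<lambda>j. (k * j) mod p) ` J"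
    then obtain j where j: "j \<in> J" "x = (k * j) mod p" by blast
    have "\<not> p dvd k * j" using assms J_not_dvd[OF j(1)] prime_p by (simp add: prime_dvd_mult_iff)
    hence "x \<noteq> 0" using j by (simp add: dvd_eq_mod_eq_0)
    moreover have "x < p" using j p_pos by simp
    ultimately show "x \<in> J" by simp
  qed
  have "(\<lambda>j. (k * j) mod p) ` J = J"
    using inj sub by (intro endo_inj_surj) auto
  thus ?thesis using inj by (simp add: bij_betw_def)
qed

definition Nm :: "complex \<Rightarrow> complex" where
  "Nm x = (\<Prod>j\<in>J. \<sigma> j x)"

definition Tr :: "complex \<Rightarrow> complex" where
  "Tr x = (\<Sum>j\<in>J. \<sigma> j x)"

lemma ZZ_Nm: "Nm x \<in> ZZ"
  unfolding Nm_def by auto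

lemma ZZ_Tr: "Tr x \<in> ZZ"
  unfolding Tr_def by auto

lemma sigma_Nm:
  assumes "x \<in> ZZ" "\<not> p dvd k"
  shows "\<sigma> k (Nm x) = Nm x"
proof -
  have "\<sigma> k (Nm x) = (\<Prod>j\<in>J. \<sigma> k (\<sigma> j x))"
    unfolding Nm_def using assms by (intro sigma_prod) auto
  also have "\<dots> = (\<Prod>j\<in>J. \<sigma> ((k * j) mod p) x)"
    using assms J_not_dvd by (intro prod.cong refl) (simp add: sigma_sigma sigma_mod[of "k * _"])
  also have "\<dots> = (\<Prod>j\<in>J. \<sigma> j x)"
    using prod.reindex_bij_betw[OF bij_betw_mult_mod_J[OF assms(2)], of "\<lambda>j. \<sigma> j x"] by simp
  finally show ?thesis unfolding Nm_def .
qed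

lemma sigma_Tr:
  assumes "x \<in> ZZ" "\<not> p dvd k"
  shows "\<sigma> k (Tr x) = Tr x"
proof -
  have "\<sigma> k (Tr x) = (\<Sum>j\<in>J. \<sigma> k (\<sigma> j x))"
    unfolding Tr_def using assms by (intro sigma_sum) auto
  also have "\<dots> = (\<Sum>j\<in>J. \<sigma> ((k * j) mod p) x)"
    using assms J_not_dvd by (intro sum.cong refl) (simp add: sigma_sigma sigma_mod[of "k * _"])
  also have "\<dots> = (\<Sum>j\<in>J. \<sigma> j x)"
    using sum.reindex_bij_betw[OF bij_betw_mult_mod_J[OF assms(2)], of "\<lambda>j. \<sigma> j x"] by simp
  finally show ?thesis unfolding Tr_def .
qed

lemma sum_J_zeta_pow_shift:
  assumes "k < p" "i < p"
  shows "(\<Sum>j\<in>J. \<zeta> ^ (j * (k + (p - i)))) = (if k = i then of_nat p - 1 else -1)"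
proof -
  have "p dvd k + (p - i) \<longleftrightarrow> k = i"
  proof
    assume "p dvd k + (p - i)"
    then obtain c where c: "k + (p - i) = p * c" by (elim dvdE)
    moreover have "0 < k + (p - i)" "k + (p - i) < p * 2" using assms by simp_all
    ultimately have "c = 1" by (cases c) auto
    thus "k = i" using c assms by simp
  qed (use assms in simp)
  thus ?thesis using sum_J_zeta_pow[of "k + (p - i)"] by simp
qed

text \<open>Discrete Fourier inversion, recovering the coefficients of a reduced representative from its
  conjugates.\<close>

lemma sum_J_ipoly_zeta_pow_mult:
  assumes dg: "degree g < p - 1" and i: "i < p"
  shows "(\<Sum>j\<in>J. ipoly g (\<zeta> ^ j) * \<zeta> ^ (j * (p - i))) = of_int (int p * coeff g i - (\<Sum>k<p. coeff g k))"
proof -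
  have dg': "degree g < p" using dg by simp
  have "(\<Sum>j\<in>J. ipoly g (\<zeta> ^ j) * \<zeta> ^ (j * (p - i)))
      = (\<Sum>j\<in>J. \<Sum>k<p. of_int (coeff g k) * \<zeta> ^ (j * (k + (p - i))))"
  proof (intro sum.cong refl)
    fix j
    have pow_eq: "(\<zeta> ^ j) ^ k * \<zeta> ^ (j * (p - i)) = \<zeta> ^ (j * (k + (p - i)))" for k
      by (simp only: power_mult[symmetric] power_add[symmetric] add_mult_distrib2[symmetric])
    have "ipoly g (\<zeta> ^ j) * \<zeta> ^ (j * (p - i)) = (\<Sum>k<p. of_int (coeff g k) * (\<zeta> ^ j) ^ k) * \<zeta> ^ (j * (p - i))"
      by (simp only: ipoly_eq_sum_coeff[OF dg'])
    also have "\<dots> = (\<Sum>k<p. of_int (coeff g k) * ((\<zeta> ^ j) ^ k * \<zeta> ^ (j * (p - i))))"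
      by (simp only: sum_distrib_right mult.assoc)
    also have "\<dots> = (\<Sum>k<p. of_int (coeff g k) * \<zeta> ^ (j * (k + (p - i))))"
      by (simp only: pow_eq)
    finally show "ipoly g (\<zeta> ^ j) * \<zeta> ^ (j * (p - i)) = (\<Sum>k<p. of_int (coeff g k) * \<zeta> ^ (j * (k + (p - i))))" .
  qed
  also have "\<dots> = (\<Sum>k<p. of_int (coeff g k) * (\<Sum>j\<in>J. \<zeta> ^ (j * (k + (p - i)))))"
    by (subst sum.swap) (simp add: sum_distrib_left)
  also have "\<dots> = (\<Sum>k<p. of_int (coeff g k) * (of_nat p * (if k = i then 1 else 0) - 1))"
  proof (intro sum.cong refl)
    fix k assume "k \<in> {..<p}"
    hence "(\<Sum>j\<in>J. \<zeta> ^ (j * (k + (p - i)))) = (if k = i then of_nat p - 1 else -1)"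
      using sum_J_zeta_pow_shift i by simp
    thus "of_int (coeff g k) * (\<Sum>j\<in>J. \<zeta> ^ (j * (k + (p - i)))) =
          of_int (coeff g k) * (of_nat p * (if k = i then 1 else 0) - 1)" by simp
  qed
  also have "\<dots> = of_nat p * of_int (coeff g i) - (\<Sum>k<p. of_int (coeff g k))"
  proof -
    have "(\<Sum>k<p. of_int (coeff g k) * (of_nat p * (if k = i then 1 else 0) - 1))
       = (\<Sum>k<p. of_nat p * (if k = i then of_int (coeff g k) else 0) - of_int (coeff g k) :: complex)"
      by (intro sum.cong refl) (simp add: algebra_simps)
    also have "\<dots> = of_nat p * (\<Sum>k<p. (if k = i then of_int (coeff g k) else 0)) - (\<Sum>k<p. of_int (coeff g k))"
      by (simp only: sum_subtractf sum_distrib_left)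
    also have "(\<Sum>k<p. (if k = i then of_int (coeff g k) else 0)) = (of_int (coeff g i) :: complex)"
      using i by (simp add: sum.delta)
    finally show ?thesis .
  qed
  finally show ?thesis by simp
qed

lemma int_if_sigma_fixed:
  assumes x: "x \<in> ZZ" and fx: "\<And>j. j \<in> J \<Longrightarrow> \<sigma> j x = x"
  shows "\<exists>n. x = of_int n"
proof -
  obtain f where f: "x = ipoly f \<zeta>" using x ZZ_iff by blast
  obtain g where g: "degree g < p - 1" "ipoly g \<zeta> = ipoly f \<zeta>" using ex_reduced_rep by blast
  have gx: "ipoly g \<zeta> = x" using f g by simp
  have gj: "ipoly g (\<zeta> ^ j) = x" if "j \<in> J" for j
    using sigma_ipoly[of x g j] gx fx that J_not_dvd by auto
  define S where "S = (\<Sum>k<p. coeff g k)"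
  have key: "of_int (int p * coeff g i - S) = - x" if "1 \<le> i" "i < p" for i
  proof -
    have "of_int (int p * coeff g i - S) = (\<Sum>j\<in>J. ipoly g (\<zeta> ^ j) * \<zeta> ^ (j * (p - i)))"
      using sum_J_ipoly_zeta_pow_mult[OF g(1) that(2)] by (simp add: S_def)
    also have "\<dots> = x * (\<Sum>j\<in>J. \<zeta> ^ (j * (p - i)))"
      by (simp add: gj sum_distrib_left)
    also have "\<dots> = - x"
    proof -
      have "\<not> p dvd (p - i)" using that by (auto dest: dvd_imp_le)
      thus ?thesis using sum_J_zeta_pow[of "p - i"] by simp
    qed
    finally show ?thesis .
  qed
  have cp1: "coeff g (p - 1) = 0" using g(1) by (simp add: coeff_eq_0)
  have "of_int (- S) = - x" using key[of "p - 1"] cp1 p_ge_3 by simp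
  hence ci: "coeff g i = 0" if "1 \<le> i" "i < p" for i
    using key[OF that] p_pos by (simp add: of_int_eq_iff[symmetric])
  have "coeff g n = 0" if "n \<noteq> 0" for n
    using that ci g(1) by (cases "n < p") (auto simp: coeff_eq_0)
  hence "g = [:coeff g 0:]" by (intro poly_eqI) (auto simp: coeff_pCons split: nat.split)
  hence "x = of_int (coeff g 0)" using gx by (metis ipoly_const)
  thus ?thesis by blast
qed

lemma Nm_int: "x \<in> ZZ \<Longrightarrow> \<exists>n. Nm x = of_int n"
  using int_if_sigma_fixed[OF ZZ_Nm] sigma_Nm J_not_dvd by blast

lemma Tr_int: "x \<in> ZZ \<Longrightarrow> \<exists>n. Tr x = of_int n"
  using int_if_sigma_fixed[OF ZZ_Tr] sigma_Tr J_not_dvd by blast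

lemma dvd_if_of_int_eq_mult:
  assumes w: "w \<in> ZZ" and eq: "(of_int n :: complex) = of_int d * w" and d: "d \<noteq> 0"
  shows "d dvd n"
proof -
  have "\<sigma> j w = w" if "j \<in> J" for j
  proof -
    have "of_int n = \<sigma> j (of_int d * w)" using eq J_not_dvd[OF that] by (metis sigma_of_int)
    also have "\<dots> = of_int d * \<sigma> j w" using sigma_mult[of "of_int d" w j] w J_not_dvd[OF that] by simp
    finally show ?thesis using eq d by simp
  qed
  then obtain m where "w = of_int m" using int_if_sigma_fixed[OF w] by blast
  hence "(of_int n :: complex) = of_int (d * m)" using eq by simp
  hence "n = d * m" by (simp only: of_int_eq_iff)
  thus ?thesis by simp
qed

subsection \<open>The prime \<open>\<lambda> = 1 - \<zeta>\<close> above \<open>p\<close>\<close>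

abbreviation lam :: complex where "lam \<equiv> 1 - \<zeta>"

lemma lam_neq_0: "lam \<noteq> 0"
  using zeta_neq_1 by simp

lemma ZZ_lam [simp, intro]: "lam \<in> ZZ"
  by auto

lemma p_eq_prod_one_minus_zeta_pow: "of_nat p = (\<Prod>j\<in>J. 1 - \<zeta> ^ j)"
proof -
  define Q :: "complex poly" where "Q = (\<Prod>j\<in>J. [:- (\<zeta> ^ j), 1:])"
  define P :: "complex poly" where "P = map_poly of_int cyclo"
  have dP: "degree P = p - 1" unfolding P_def by (simp add: degree_map_poly degree_cyclo)
  have cP: "coeff P (p - 1) = 1" unfolding P_def using p_pos by (simp add: coeff_map_poly coeff_cyclo)
  have dQ: "degree Q = p - 1" unfolding Q_def by (subst degree_prod_sum_eq) auto
  have lQ: "lead_coeff Q = 1" unfolding Q_def by (simp add: lead_coeff_prod)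
  define A where "A = (\<lambda>j. \<zeta> ^ j) ` J"
  have cA: "card A = p - 1"
    unfolding A_def by (subst card_image) (auto intro!: inj_onI zeta_pow_inj)
  have "P = Q"
  proof (rule poly_eqI_degree_lead_coeff[of P "p - 1" Q A])
    show "coeff P (p - 1) = coeff Q (p - 1)" using cP lQ dQ by simp
    show "p - 1 \<le> card A" using cA by simp
    show "degree P \<le> p - 1" using dP by simp
    show "degree Q \<le> p - 1" using dQ by simp
    fix w assume "w \<in> A"
    then obtain j where j: "j \<in> J" "w = \<zeta> ^ j" unfolding A_def by blast
    have "poly P w = 0"
      using ipoly_cyclo_zeta_pow[OF J_not_dvd[OF j(1)]] j by (simp add: P_def ipoly_def)
    moreover have "poly Q w = 0" unfolding Q_def poly_prod using j by (auto intro: prod_zero)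
    ultimately show "poly P w = poly Q w" by simp
  qed
  have "poly P 1 = of_nat p" by (simp add: P_def flip: ipoly_def) (simp add: ipoly_cyclo)
  moreover have "poly Q 1 = (\<Prod>j\<in>J. 1 - \<zeta> ^ j)" unfolding Q_def poly_prod by simp
  ultimately show ?thesis using \<open>P = Q\<close> by simp
qed

definition lam_quot :: "nat \<Rightarrow> complex" where
  "lam_quot j = (\<Sum>i<j. \<zeta> ^ i)"

lemma ZZ_lam_quot [intro]: "lam_quot j \<in> ZZ"
  unfolding lam_quot_def by auto

lemma one_minus_zeta_pow: "1 - \<zeta> ^ j = lam * lam_quot j"
  unfolding lam_quot_def by (rule one_diff_power_eq)

text \<open>\<open>\<lambda> = 1 - (\<zeta>\<^sup>j)\<^sup>i\<close> for \<open>i j \<equiv> 1 (mod p)\<close>, so \<open>\<lambda>\<close> and \<open>1 - \<zeta>\<^sup>j\<close> divide each other.\<close>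

lemma lam_quot_unit:
  assumes j: "j \<in> J"
  shows "\<exists>t\<in>ZZ. lam_quot j * t = 1"
proof -
  have "1 \<in> (\<lambda>i. (j * i) mod p) ` J"
    using bij_betw_mult_mod_J[OF J_not_dvd[OF j]] p_ge_3 unfolding bij_betw_def by auto
  then obtain i where i: "(j * i) mod p = 1" by auto
  have "\<zeta> ^ (j * i) = \<zeta>" using zeta_pow_mod[of "j * i"] i by simp
  hence "lam = 1 - (\<zeta> ^ j) ^ i" by (simp add: power_mult)
  also have "\<dots> = (1 - \<zeta> ^ j) * (\<Sum>k<i. (\<zeta> ^ j) ^ k)" by (rule one_diff_power_eq)
  also have "\<dots> = lam * (lam_quot j * (\<Sum>k<i. (\<zeta> ^ j) ^ k))"
    by (simp add: one_minus_zeta_pow)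
  finally have "lam_quot j * (\<Sum>k<i. (\<zeta> ^ j) ^ k) = 1" using lam_neq_0 by simp
  moreover have "(\<Sum>k<i. (\<zeta> ^ j) ^ k) \<in> ZZ" by auto
  ultimately show ?thesis by blast
qed

definition \<epsilon> :: complex where
  "\<epsilon> = (\<Prod>j\<in>J. lam_quot j)"

lemma ZZ_eps [intro]: "\<epsilon> \<in> ZZ"
  unfolding \<epsilon>_def by auto

lemma eps_unit: "\<exists>t\<in>ZZ. \<epsilon> * t = 1"
proof -
  obtain T where T: "\<And>j. j \<in> J \<Longrightarrow> T j \<in> ZZ \<and> lam_quot j * T j = 1"
    using lam_quot_unit by metis
  hence "\<epsilon> * (\<Prod>j\<in>J. T j) = 1"
    unfolding \<epsilon>_def by (simp add: prod.distrib[symmetric])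
  moreover have "(\<Prod>j\<in>J. T j) \<in> ZZ" using T by auto
  ultimately show ?thesis by blast
qed

lemma ZZ_inverse_eps [intro]: "inverse \<epsilon> \<in> ZZ"
  using eps_unit by (metis inverse_unique)

lemma eps_neq_0: "\<epsilon> \<noteq> 0"
  using eps_unit by auto

lemma p_eq_lam_pow_eps: "of_nat p = lam ^ (p - 1) * \<epsilon>"
proof -
  have "of_nat p = (\<Prod>j\<in>J. lam * lam_quot j)"
    using p_eq_prod_one_minus_zeta_pow by (simp add: one_minus_zeta_pow)
  also have "\<dots> = lam ^ (p - 1) * \<epsilon>" by (simp add: prod.distrib \<epsilon>_def)
  finally show ?thesis .
qed

lemma lam_pow_eq_p_inverse_eps: "lam ^ (p - 1) = of_nat p * inverse \<epsilon>"
  using p_eq_lam_pow_eps eps_neq_0 by (simp add: field_simps)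

definition lcong :: "nat \<Rightarrow> complex \<Rightarrow> complex \<Rightarrow> bool" where
  "lcong k x y \<longleftrightarrow> (\<exists>w\<in>ZZ. x - y = lam ^ k * w)"

lemma lcong_iff_diff: "lcong k x y \<longleftrightarrow> lcong k (x - y) 0"
  by (simp add: lcong_def)

lemma lcong_0I: "w \<in> ZZ \<Longrightarrow> x = lam ^ k * w \<Longrightarrow> lcong k x 0"
  unfolding lcong_def by (intro bexI[of _ w]) simp_all

lemma lcong_refl [simp]: "lcong k x x"
  unfolding lcong_def by (intro bexI[of _ 0]) auto

lemma lcong_sym: "lcong k x y \<Longrightarrow> lcong k y x"
  unfolding lcong_def
proof (elim bexE)
  fix a assume "a \<in> ZZ" "x - y = lam ^ k * a"
  hence "y - x = lam ^ k * (- a)" by (simp add: algebra_simps)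
  thus "\<exists>c\<in>ZZ. y - x = lam ^ k * c" using \<open>a \<in> ZZ\<close> by blast
qed

lemma lcong_trans: "lcong k x y \<Longrightarrow> lcong k y w \<Longrightarrow> lcong k x w"
  unfolding lcong_def
proof (elim bexE)
  fix a b assume "a \<in> ZZ" "b \<in> ZZ" "x - y = lam ^ k * a" "y - w = lam ^ k * b"
  moreover have "x - w = (x - y) + (y - w)" by simp
  ultimately have "x - w = lam ^ k * (a + b)" by (simp add: distrib_left)
  thus "\<exists>c\<in>ZZ. x - w = lam ^ k * c"
    using \<open>a \<in> ZZ\<close> \<open>b \<in> ZZ\<close> by blast
qed

lemma lcong_add: "lcong k x y \<Longrightarrow> lcong k x' y' \<Longrightarrow> lcong k (x + x') (y + y')"
  unfolding lcong_def
proof (elim bexE)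
  fix a b assume "a \<in> ZZ" "b \<in> ZZ" "x - y = lam ^ k * a" "x' - y' = lam ^ k * b"
  hence "x + x' - (y + y') = lam ^ k * (a + b)" by (simp add: algebra_simps)
  thus "\<exists>c\<in>ZZ. x + x' - (y + y') = lam ^ k * c"
    using \<open>a \<in> ZZ\<close> \<open>b \<in> ZZ\<close> by blast
qed

lemma lcong_diff: "lcong k x y \<Longrightarrow> lcong k x' y' \<Longrightarrow> lcong k (x - x') (y - y')"
  unfolding lcong_def
proof (elim bexE)
  fix a b assume "a \<in> ZZ" "b \<in> ZZ" "x - y = lam ^ k * a" "x' - y' = lam ^ k * b"
  hence "x - x' - (y - y') = lam ^ k * (a - b)" by (simp add: algebra_simps)
  thus "\<exists>c\<in>ZZ. x - x' - (y - y') = lam ^ k * c"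
    using \<open>a \<in> ZZ\<close> \<open>b \<in> ZZ\<close> by blast
qed

lemma lcong_mult:
  "lcong k x y \<Longrightarrow> lcong k x' y' \<Longrightarrow> x \<in> ZZ \<Longrightarrow> y' \<in> ZZ \<Longrightarrow> lcong k (x * x') (y * y')"
  unfolding lcong_def
proof (elim bexE)
  fix a b assume "a \<in> ZZ" "b \<in> ZZ" "x - y = lam ^ k * a" "x' - y' = lam ^ k * b" "x \<in> ZZ" "y' \<in> ZZ"
  have "x * x' - y * y' = x * (x' - y') + (x - y) * y'" by (simp add: algebra_simps)
  hence "x * x' - y * y' = lam ^ k * (x * b + a * y')"
    using \<open>x - y = _\<close> \<open>x' - y' = _\<close> by (simp add: algebra_simps)
  thus "\<exists>c\<in>ZZ. x * x' - y * y' = lam ^ k * c"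
    using \<open>a \<in> ZZ\<close> \<open>b \<in> ZZ\<close> \<open>x \<in> ZZ\<close> \<open>y' \<in> ZZ\<close> by blast
qed

lemma lcong_power: "lcong k x y \<Longrightarrow> x \<in> ZZ \<Longrightarrow> y \<in> ZZ \<Longrightarrow> lcong k (x ^ n) (y ^ n)"
  by (induction n) (auto intro: lcong_mult)

lemma lcong_sum_0: "(\<And>i. i \<in> A \<Longrightarrow> lcong k (f i) 0) \<Longrightarrow> lcong k (sum f A) 0"
proof (induction A rule: infinite_finite_induct)
  case (insert x A)
  hence "lcong k (f x + sum f A) (0 + 0)" by (intro lcong_add) auto
  thus ?case using insert by simp
qed auto

lemma lcong_mono: "lcong k x y \<Longrightarrow> k' \<le> k \<Longrightarrow> lcong k' x y"
  unfolding lcong_def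
proof (elim bexE)
  fix a assume "a \<in> ZZ" "x - y = lam ^ k * a" "k' \<le> k"
  hence "x - y = lam ^ k' * (lam ^ (k - k') * a)"
    by (simp add: mult.assoc[symmetric] power_add[symmetric])
  thus "\<exists>c\<in>ZZ. x - y = lam ^ k' * c" using \<open>a \<in> ZZ\<close> by blast
qed

lemma int_dvd_if_lam_dvd:
  assumes "w \<in> ZZ" "of_int n = lam * w"
  shows "int p dvd n"
proof -
  have "of_int (n ^ (p - 1)) = lam ^ (p - 1) * w ^ (p - 1)" using assms by (simp add: power_mult_distrib)
  also have "\<dots> = of_int (int p) * (inverse \<epsilon> * w ^ (p - 1))"
    using lam_pow_eq_p_inverse_eps by (simp add: mult_ac)
  finally have "int p dvd n ^ (p - 1)"
    using dvd_if_of_int_eq_mult[of "inverse \<epsilon> * w ^ (p - 1)" "n ^ (p - 1)" "int p"] assms p_pos by auto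
  thus ?thesis using prime_int_p prime_dvd_power by blast
qed

lemma lcong_of_int_0_if_dvd: "int p dvd n \<Longrightarrow> lcong (p - 1) (of_int n) 0"
proof -
  assume "int p dvd n"
  then obtain c where "n = int p * c" by (elim dvdE)
  hence "of_int n = lam ^ (p - 1) * (\<epsilon> * of_int c)" by (simp add: p_eq_lam_pow_eps mult_ac)
  thus ?thesis unfolding lcong_def using ZZ_eps by auto
qed

lemma lcong_1_of_int_0_iff: "lcong 1 (of_int n) 0 \<longleftrightarrow> int p dvd n"
proof
  assume "lcong 1 (of_int n) 0"
  thus "int p dvd n" unfolding lcong_def using int_dvd_if_lam_dvd by auto
next
  assume "int p dvd n"
  hence "lcong (p - 1) (of_int n) 0" by (rule lcong_of_int_0_if_dvd)
  thus "lcong 1 (of_int n) 0" using p_ge_3 lcong_mono[of "p - 1" "of_int n" 0 1] by simp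
qed

lemma lcong_int:
  assumes "x \<in> ZZ"
  obtains n where "lcong 1 x (of_int n)"
proof -
  obtain f where f: "x = ipoly f \<zeta>" using assms ZZ_iff by blast
  have "poly (f - [:poly f 1:]) 1 = 0" by simp
  hence "[:-1, 1:] dvd f - [:poly f 1:]" using poly_eq_0_iff_dvd[of "f - [:poly f 1:]" 1] by simp
  then obtain q where q: "f - [:poly f 1:] = [:-1, 1:] * q" by (elim dvdE)
  have "x - of_int (poly f 1) = (\<zeta> - 1) * ipoly q \<zeta>"
    using arg_cong[OF q, of "\<lambda>g. ipoly g \<zeta>"] f by (simp add: algebra_simps)
  hence "x - of_int (poly f 1) = lam ^ 1 * (- ipoly q \<zeta>)" by (simp add: algebra_simps)
  hence "lcong 1 x (of_int (poly f 1))" unfolding lcong_def by blast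
  thus ?thesis by (rule that)
qed

lemma congZ_if_lcong: "lcong (n * (p - 1)) x y \<Longrightarrow> congZ p (int p ^ n) x y"
  unfolding lcong_def congZ_def
proof (elim bexE)
  fix w assume "w \<in> ZZ" "x - y = lam ^ (n * (p - 1)) * w"
  have "lam ^ (n * (p - 1)) = (lam ^ (p - 1)) ^ n" by (simp only: mult.commute[of n] power_mult)
  also have "\<dots> = of_int (int p ^ n) * inverse \<epsilon> ^ n"
    using lam_pow_eq_p_inverse_eps by (simp add: power_mult_distrib)
  finally have "x - y = of_int (int p ^ n) * (inverse \<epsilon> ^ n * w)"
    using \<open>x - y = _\<close> by (simp add: mult.assoc)
  thus "\<exists>w\<in>ZZ. x - y = of_int (int p ^ n) * w" using \<open>w \<in> ZZ\<close> by blast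
qed

lemma unit_not_lcong_0:
  assumes "x \<in> ZZ" "x' \<in> ZZ" "x * x' = 1"
  shows "\<not> lcong 1 x 0"
proof
  assume "lcong 1 x 0"
  hence "lcong 1 (x * x') (0 * x')" using assms by (intro lcong_mult) auto
  hence "lcong 1 (of_int 1) 0" using assms by simp
  thus False using p_ge_3 by (simp only: lcong_1_of_int_0_iff) simp
qed

lemma unit_lcong_int_not_dvd:
  assumes x: "x \<in> ZZ" "x' \<in> ZZ" "x * x' = 1" and c: "lcong 1 x (of_int c)"
  shows "\<not> int p dvd c"
  using unit_not_lcong_0[OF x] c lcong_trans lcong_1_of_int_0_iff by blast

text \<open>The residue field \<open>\<int>[\<zeta>]/\<lambda>\<close> is \<open>\<int>/p\<close>: linear congruences modulo \<open>\<lambda>\<close> can be solved in integers.\<close>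

lemma lcong_1_solve:
  assumes x: "x \<in> ZZ" "\<not> lcong 1 x 0" and r: "r \<in> ZZ"
  obtains t where "lcong 1 r (x * of_int t)"
proof -
  obtain x0 where x0: "lcong 1 x (of_int x0)" using lcong_int x(1) by blast
  obtain r0 where r0: "lcong 1 r (of_int r0)" using lcong_int r by blast
  have "\<not> int p dvd x0" using x0 x(2) lcong_trans lcong_1_of_int_0_iff by blast
  hence "coprime x0 (int p)" using prime_imp_coprime[OF prime_int_p] coprime_commute by blast
  then obtain iv where "[x0 * iv = 1] (mod int p)" using cong_solve_coprime_int by blast
  hence "int p dvd r0 * (x0 * iv - 1)" by (simp add: cong_iff_dvd_diff)
  moreover have "r0 - x0 * (r0 * iv) = - (r0 * (x0 * iv - 1))" by (simp add: algebra_simps)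
  ultimately have "int p dvd r0 - x0 * (r0 * iv)" by (simp only: dvd_minus_iff)
  hence "lcong 1 (of_int r0) (of_int x0 * of_int (r0 * iv))"
    by (subst lcong_iff_diff) (simp flip: lcong_1_of_int_0_iff)
  moreover have "lcong 1 (of_int x0 * of_int (r0 * iv)) (x * of_int (r0 * iv))"
    using x(1) by (intro lcong_mult lcong_sym[OF x0]) auto
  ultimately show ?thesis using r0 lcong_trans that by blast
qed

lemma cnj_lam: "cnj lam = - (\<zeta> ^ (p - 1)) * lam"
proof -
  have zz: "\<zeta> ^ (p - 1) * \<zeta> = 1" using zeta_pow_p p_pos by (metis power_Suc2 Suc_diff_1)
  have "cnj lam = 1 - \<zeta> ^ (p - 1)" using cnj_zeta_pow[of 1] by simp
  also have "\<dots> = - (\<zeta> ^ (p - 1)) * lam" using zz by (simp add: algebra_simps)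
  finally show ?thesis .
qed

lemma lcong_cnj:
  assumes "lcong k x y"
  shows "lcong k (cnj x) (cnj y)"
proof -
  obtain w where w: "w \<in> ZZ" "x - y = lam ^ k * w" using assms unfolding lcong_def by auto
  have "cnj x - cnj y = cnj (lam ^ k) * cnj w"
    by (simp only: w(2) complex_cnj_diff[symmetric] complex_cnj_mult)
  also have "cnj (lam ^ k) = (- (\<zeta> ^ (p - 1))) ^ k * lam ^ k"
    by (simp only: complex_cnj_power cnj_lam power_mult_distrib)
  finally have "cnj x - cnj y = lam ^ k * ((- (\<zeta> ^ (p - 1))) ^ k * cnj w)" by (simp add: mult_ac)
  moreover have "(- (\<zeta> ^ (p - 1))) ^ k * cnj w \<in> ZZ" using w(1) by auto
  ultimately show ?thesis unfolding lcong_def by blast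
qed

text \<open>Since \<open>cnj \<lambda> = -\<zeta>\<^sup>-\<^sup>1 \<lambda>\<close> and \<open>\<zeta> \<equiv> 1\<close>, a real multiple \<open>\<lambda> y\<close> has \<open>y \<equiv> -cnj y \<equiv> -y\<close> modulo \<open>\<lambda>\<close>,
  and \<open>p\<close> is odd.\<close>

lemma lcong_0_if_real_lam_mult:
  assumes y: "y \<in> ZZ" and real: "cnj (lam * y) = lam * y"
  shows "lcong 1 y 0"
proof -
  have "cnj (lam * y) = - (\<zeta> ^ (p - 1)) * lam * cnj y" by (simp only: complex_cnj_mult cnj_lam)
  hence "lam * (- (\<zeta> ^ (p - 1)) * cnj y) = lam * y" using real by (simp add: mult_ac)
  hence y_eq: "y = - (\<zeta> ^ (p - 1)) * cnj y" using lam_neq_0 by (simp only: mult_cancel_left) simp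
  obtain c where c: "lcong 1 y (of_int c)" using lcong_int y by blast
  have "lcong 1 \<zeta> 1" unfolding lcong_def by (intro bexI[of _ "-1"]) auto
  hence "lcong 1 (\<zeta> ^ (p - 1)) (1 ^ (p - 1))" by (intro lcong_power) auto
  hence "lcong 1 (0 - \<zeta> ^ (p - 1)) (0 - 1)" by (intro lcong_diff) auto
  moreover have "lcong 1 (cnj y) (of_int c)" using lcong_cnj[OF c] by simp
  ultimately have "lcong 1 (- (\<zeta> ^ (p - 1)) * cnj y) (- 1 * of_int c)"
    using y by (intro lcong_mult) auto
  hence "lcong 1 (of_int c) (- of_int c)"
    using c y_eq lcong_sym lcong_trans by (metis mult_minus1)
  hence "lcong 1 (of_int (2 * c)) 0" by (subst (asm) lcong_iff_diff) simp
  hence "int p dvd 2 * c" by (simp only: lcong_1_of_int_0_iff)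
  hence "int p dvd c" using not_dvd_2 prime_int_p by (simp add: prime_dvd_mult_iff)
  thus ?thesis using c lcong_trans lcong_1_of_int_0_iff by blast
qed

subsection \<open>Units congruent to a rational integer modulo \<open>p\<close> are real\<close>

lemma coeff_bound:
  assumes deg: "degree g < p - 1" and norm: "\<And>j. j \<in> J \<Longrightarrow> norm (ipoly g (\<zeta> ^ j)) = 1"
    and i: "i < p"
  shows "\<bar>coeff g i\<bar> \<le> 1"
proof -
  define S where "S = (\<Sum>k<p. coeff g k)"
  have bound: "\<bar>int p * coeff g k - S\<bar> \<le> int p - 1" if "k < p" for k
  proof -
    have "(of_int (int p * coeff g k - S) :: complex) = (\<Sum>j\<in>J. ipoly g (\<zeta> ^ j) * \<zeta> ^ (j * (p - k)))"
      using sum_J_ipoly_zeta_pow_mult[OF deg that] by (simp add: S_def)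
    also have "norm \<dots> \<le> (\<Sum>j\<in>J. norm (ipoly g (\<zeta> ^ j) * \<zeta> ^ (j * (p - k))))"
      by (rule norm_sum)
    also have "\<dots> = real p - 1" using norm p_pos by (simp add: norm_mult of_nat_diff)
    finally show ?thesis by (simp only: norm_of_int)
  qed
  have "coeff g (p - 1) = 0" using deg by (simp add: coeff_eq_0)
  hence "\<bar>S\<bar> \<le> int p - 1" using bound[of "p - 1"] p_pos by simp
  hence "int p * \<bar>coeff g i\<bar> < int p * 2" using bound[OF i] by (simp add: abs_mult)
  hence "\<bar>coeff g i\<bar> < 2" using p_pos by (simp only: mult_less_cancel_left)
  thus ?thesis by simp
qed

text \<open>Kronecker's argument: a reduced representative with unimodular conjugates has coefficients
  in \<open>{-1, 0, 1}\<close>, so if it is \<open>1\<close> modulo \<open>p \<ge> 3\<close> it equals \<open>1\<close>.\<close>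

lemma eq_1_if_unimodular_cong_1:
  assumes v: "v \<in> ZZ" and norm: "\<And>j. j \<in> J \<Longrightarrow> norm (\<sigma> j v) = 1"
    and y: "y \<in> ZZ" and vy: "v - 1 = of_nat p * y"
  shows "v = 1"
proof -
  obtain g where g: "degree g < p - 1" "ipoly g \<zeta> = v"
    using ex_reduced_rep v by (auto simp: ZZ_iff)
  obtain h where h: "degree h < p - 1" "ipoly h \<zeta> = y"
    using ex_reduced_rep y by (auto simp: ZZ_iff)
  have "g - 1 = smult (int p) h"
  proof (rule reduced_rep_unique)
    show "degree (g - 1) < p - 1"
      using degree_diff_le_max[of g 1] g(1) p_ge_3 by simp
    show "degree (smult (int p) h) < p - 1" using h(1) by simp
    show "ipoly (g - 1) \<zeta> = ipoly (smult (int p) h) \<zeta>" using g(2) h(2) vy by simp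
  qed
  hence coeff_g: "coeff g i - (if i = 0 then 1 else 0) = int p * coeff h i" for i
  proof -
    have "coeff (g - 1) i = coeff (smult (int p) h) i" using \<open>g - 1 = _\<close> by simp
    thus ?thesis by (cases i) auto
  qed
  have "coeff h i = 0" for i
  proof (cases "i < p")
    case True
    have "\<bar>coeff g i\<bar> \<le> 1"
      using coeff_bound[OF g(1) _ True] norm sigma_ipoly[OF g(2)[symmetric]] J_not_dvd by simp
    hence "\<bar>int p * coeff h i\<bar> \<le> 2" using coeff_g[of i] by (auto split: if_splits)
    hence "\<bar>int p * coeff h i\<bar> < int p * 1" using p_ge_3 by linarith
    hence "\<bar>coeff h i\<bar> < 1" using p_pos by (simp add: abs_mult)
    thus ?thesis by simp
  qed (use h(1) in \<open>simp add: coeff_eq_0\<close>)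
  hence "h = 0" by (simp add: poly_eqI)
  thus "v = 1" using vy h(2) by simp
qed

lemma unit_cong_int_mod_p_real:
  assumes u: "u \<in> ZZ" and u': "u' \<in> ZZ" and uu': "u * u' = 1"
    and w: "w \<in> ZZ" and uw: "u - of_int a = of_nat p * w"
  shows "cnj u = u"
proof -
  define v where "v = u * cnj u'"
  have "norm (\<sigma> j v) = 1" if j: "j \<in> J" for j
  proof -
    have nj: "\<not> p dvd j" using J_not_dvd[OF j] .
    have "\<sigma> j u * \<sigma> j u' = 1" using sigma_mult[OF u u' nj] uu' nj by simp
    hence "norm (\<sigma> j u) * norm (\<sigma> j u') = 1" by (metis norm_mult norm_one)
    moreover have "\<sigma> j v = \<sigma> j u * cnj (\<sigma> j u')"
      unfolding v_def using sigma_mult[OF u ZZ_cnj[OF u'] nj] sigma_cnj[OF u' nj] by simp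
    ultimately show ?thesis by (simp add: norm_mult)
  qed
  moreover have cnj_uu': "cnj u * cnj u' = 1" using arg_cong[OF uu', of cnj] by simp
  have "u - cnj u = of_nat p * (w - cnj w)"
    using uw arg_cong[OF uw, of cnj] by (simp add: algebra_simps)
  hence "v - 1 = of_nat p * ((w - cnj w) * cnj u')"
    unfolding v_def using cnj_uu' by (metis mult.assoc mult.commute left_diff_distrib)
  moreover have "v \<in> ZZ" "(w - cnj w) * cnj u' \<in> ZZ" unfolding v_def using u u' w by auto
  ultimately have "v = 1" by (intro eq_1_if_unimodular_cong_1)
  hence "u * cnj u' = u * u'" using uu' v_def by simp
  moreover have "u \<noteq> 0" using uu' by auto
  ultimately have "cnj u' = u'" by simp
  hence "cnj u * u' = u * u'" using cnj_uu' uu' by simp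
  moreover have "u' \<noteq> 0" using uu' by auto
  ultimately show ?thesis by simp
qed

lemma real_cong_mod_p_lam2:
  assumes u: "u \<in> ZZ" and real: "cnj u = u" and w: "w \<in> ZZ" and uw: "u - of_int a = of_nat p * w"
  obtains a' s where "s \<in> ZZ" "u - of_int a' = of_nat p * lam ^ 2 * s"
proof -
  have "of_nat p * cnj w = cnj (u - of_int a)" using uw by simp
  also have "\<dots> = u - of_int a" using real by simp
  also have "\<dots> = of_nat p * w" by (rule uw)
  finally have "of_nat p * cnj w = of_nat p * w" .
  hence w_real: "cnj w = w" using p_pos by simp
  obtain b where "lcong 1 w (of_int b)" using lcong_int w by blast
  then obtain y where y: "y \<in> ZZ" "w - of_int b = lam * y" unfolding lcong_def by auto
  have "cnj (lam * y) = lam * y" using w_real by (simp flip: y(2))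
  then obtain s where s: "s \<in> ZZ" "y = lam * s"
    using lcong_0_if_real_lam_mult[OF y(1)] unfolding lcong_def by auto
  have "u - of_int (a + int p * b) = of_nat p * (w - of_int b)" using uw by (simp add: algebra_simps)
  also have "\<dots> = of_nat p * lam ^ 2 * s" using y(2) s(2) by (simp add: power2_eq_square mult_ac)
  finally show ?thesis using s(1) that by blast
qed

lemma Nm_mult: "x \<in> ZZ \<Longrightarrow> y \<in> ZZ \<Longrightarrow> Nm (x * y) = Nm x * Nm y"
  unfolding Nm_def by (simp add: sigma_mult J_not_dvd prod.distrib)

lemma Nm_1: "Nm 1 = 1"
  unfolding Nm_def by (simp add: J_not_dvd)

lemma Nm_unit:
  assumes "u \<in> ZZ" "u' \<in> ZZ" "u * u' = 1"
  shows "Nm u = 1 \<or> Nm u = -1"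
proof -
  obtain n1 n2 where n: "Nm u = of_int n1" "Nm u' = of_int n2" using Nm_int assms by metis
  have "of_int (n1 * n2) = (1 :: complex)" using Nm_mult[of u u'] assms Nm_1 n by simp
  hence "n1 * n2 = 1" by (simp only: of_int_eq_1_iff)
  thus ?thesis using n by (auto simp: zmult_eq_1_iff)
qed

lemma sigma_lam_mult:
  assumes "\<not> p dvd j" "x \<in> ZZ"
  shows "\<sigma> j (lam * x) = lam * (lam_quot j * \<sigma> j x)"
proof -
  have "\<sigma> j lam = 1 - \<zeta> ^ j"
    using sigma_diff[of 1 \<zeta> j] sigma_zeta_pow[of j 1] assms(1) by simp
  thus ?thesis using sigma_mult[of lam x j] assms by (simp add: one_minus_zeta_pow mult_ac)
qed

lemma Tr_lam_mult:
  assumes "x \<in> ZZ"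
  obtains m where "Tr (lam * x) = of_int (int p * m)"
proof -
  obtain n where n: "Tr (lam * x) = of_int n" using Tr_int assms by blast
  have "Tr (lam * x) = lam * (\<Sum>j\<in>J. lam_quot j * \<sigma> j x)"
    unfolding Tr_def using assms J_not_dvd by (simp add: sigma_lam_mult sum_distrib_left)
  moreover have "(\<Sum>j\<in>J. lam_quot j * \<sigma> j x) \<in> ZZ" by auto
  ultimately have "int p dvd n" using n int_dvd_if_lam_dvd by metis
  then obtain m where "n = int p * m" by (elim dvdE)
  thus ?thesis using n that by blast
qed

lemma prod_expansion_mod_p2:
  fixes a :: int
  assumes "finite A" "\<And>j. j \<in> A \<Longrightarrow> t j \<in> ZZ"
  shows "\<exists>W\<in>ZZ. of_int a * (\<Prod>j\<in>A. of_int a + of_nat p * t j) =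
     of_int a ^ (card A + 1) + of_int a ^ card A * (of_nat p * (\<Sum>j\<in>A. t j)) + (of_nat p) ^ 2 * W"
  using assms
proof (induction A rule: finite_induct)
  case empty
  show ?case by (intro bexI[of _ 0]) auto
next
  case (insert x A)
  then obtain W where W: "W \<in> ZZ" and
    eq: "of_int a * (\<Prod>j\<in>A. of_int a + of_nat p * t j) =
     of_int a ^ (card A + 1) + of_int a ^ card A * (of_nat p * (\<Sum>j\<in>A. t j)) + (of_nat p) ^ 2 * W"
    by auto
  define n where "n = card A"
  define T where "T = (\<Sum>j\<in>A. t j)"
  have tx: "t x \<in> ZZ" using insert by auto
  have T: "T \<in> ZZ" unfolding T_def using insert by auto
  define W' where "W' = of_int a * W + t x * of_int a ^ n * T + of_nat p * t x * W"
  have W': "W' \<in> ZZ" unfolding W'_def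
    using W tx T by (intro ZZ_add ZZ_mult ZZ_power ZZ_of_int ZZ_of_nat)
  have "of_int a * (\<Prod>j\<in>insert x A. of_int a + of_nat p * t j)
      = (of_int a + of_nat p * t x) * (of_int a * (\<Prod>j\<in>A. of_int a + of_nat p * t j))"
    using insert by (simp add: mult_ac)
  also have "\<dots> = (of_int a + of_nat p * t x) *
      (of_int a ^ (n + 1) + of_int a ^ n * (of_nat p * T) + (of_nat p) ^ 2 * W)"
    by (simp only: eq n_def T_def)
  also have "\<dots> = of_int a ^ (n + 2) + of_int a ^ (n + 1) * (of_nat p * (t x + T)) + (of_nat p) ^ 2 * W'"
    unfolding W'_def by (simp add: algebra_simps power2_eq_square)
  finally show ?case using insert W' by (auto simp: n_def T_def add.commute)
qed

text \<open>Every conjugate of \<open>u\<close> is \<open>a + p t\<^sub>j\<close> with \<open>\<Sum> t\<^sub>j = Tr (\<lambda>\<^sup>2 s)\<close> divisible by \<open>p\<close>, so expanding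
  the product gives \<open>a Nm u \<equiv> a\<^sup>p\<close> modulo \<open>p\<^sup>2\<close>.\<close>

lemma Nm_cong_mod_p2:
  assumes s: "s \<in> ZZ" and us: "u - of_int a = of_nat p * lam ^ 2 * s" and n: "Nm u = of_int n"
  shows "int p ^ 2 dvd a * (n - a ^ (p - 1))"
proof -
  define t where "t j = \<sigma> j (lam ^ 2 * s)" for j
  have t: "t j \<in> ZZ" for j unfolding t_def by auto
  have "\<sigma> j u = of_int a + of_nat p * t j" if j: "j \<in> J" for j
  proof -
    have nj: "\<not> p dvd j" using J_not_dvd[OF j] .
    have "u = of_int a + of_nat p * (lam ^ 2 * s)" using us by (simp add: algebra_simps)
    hence "\<sigma> j u = of_int a + \<sigma> j (of_nat p * (lam ^ 2 * s))"
      using sigma_add[of "of_int a" "of_nat p * (lam ^ 2 * s)" j] nj s by auto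
    also have "\<sigma> j (of_nat p * (lam ^ 2 * s)) = of_nat p * t j"
      using sigma_mult[of "of_nat p" "lam ^ 2 * s" j] nj s by (auto simp: t_def)
    finally show ?thesis .
  qed
  hence Nm_u: "Nm u = (\<Prod>j\<in>J. of_int a + of_nat p * t j)" unfolding Nm_def by simp
  obtain m where m: "(\<Sum>j\<in>J. t j) = of_int (int p * m)"
    using Tr_lam_mult[of "lam * s"] s unfolding t_def Tr_def by (auto simp: power2_eq_square mult.assoc)
  obtain W where W: "W \<in> ZZ" and eqW: "of_int a * (\<Prod>j\<in>J. of_int a + of_nat p * t j) =
     of_int a ^ (card J + 1) + of_int a ^ card J * (of_nat p * (\<Sum>j\<in>J. t j)) + (of_nat p) ^ 2 * W"
    using prod_expansion_mod_p2[of J t a] t by auto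
  have card_J: "card J + 1 = p" "card J = p - 1" using p_pos by auto
  have power_p: "(x::complex) * x ^ (p - Suc 0) = x ^ p" for x
    using power_Suc[of x "p - 1"] Suc_diff_1[OF p_pos] by simp
  have "of_int (a * n - a ^ p) = of_int (int p ^ 2) * (of_int (a ^ (p - 1) * m) + W)"
    using eqW unfolding Nm_u[symmetric] n card_J m
    by (simp add: algebra_simps power2_eq_square power_p)
  hence "int p ^ 2 dvd a * n - a ^ p"
    using W p_pos by (intro dvd_if_of_int_eq_mult[of "of_int (a ^ (p - 1) * m) + W"]) auto
  moreover have "a * n - a ^ p = a * (n - a ^ (p - 1))"
    using p_pos by (simp add: algebra_simps power_eq_if)
  ultimately show ?thesis by simp
qed

lemma pow_p_minus_1_cong_1_mod_p2:
  assumes u: "u \<in> ZZ" and u': "u' \<in> ZZ" and uu': "u * u' = 1"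
    and s: "s \<in> ZZ" and us: "u - of_int a = of_nat p * lam ^ 2 * s"
  shows "int p ^ 2 dvd a ^ (p - 1) - 1"
proof -
  have "lcong 1 u (of_int a)" unfolding lcong_def using us s
    by (intro bexI[of _ "of_nat p * lam * s"]) (auto simp: power2_eq_square mult_ac)
  hence a: "\<not> int p dvd a" by (rule unit_lcong_int_not_dvd[OF u u' uu'])
  obtain n where n: "Nm u = of_int n" "n = 1 \<or> n = -1"
    using Nm_unit[OF u u' uu'] by (metis of_int_1 of_int_minus)
  have "coprime (int p ^ 2) a" using a prime_int_p by (simp add: prime_imp_coprime)
  hence n_cong: "int p ^ 2 dvd n - a ^ (p - 1)"
    using Nm_cong_mod_p2[OF s us n(1)] by (simp add: coprime_dvd_mult_right_iff)
  have "n = 1"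
  proof (rule ccontr)
    assume "n \<noteq> 1"
    hence "int p dvd -1 - a ^ (p - 1)"
      using n(2) n_cong dvd_trans[of "int p" "int p ^ 2"] by (auto simp: power2_eq_square)
    hence "int p dvd (-1 - a ^ (p - 1)) + (a ^ (p - 1) - 1)"
      using fermat_theorem_int[OF prime_p a] by (rule dvd_add)
    thus False using not_dvd_2 by simp
  qed
  thus ?thesis using n_cong by (simp add: dvd_diff_commute)
qed

subsection \<open>Lifting \<open>p\<close>-th roots \<open>\<lambda>\<close>-adically\<close>

lemma binomial_term_lcong:
  assumes m: "m \<ge> 2" and k: "k \<in> {2..p}"
  shows "lcong (m + p) (of_nat (p choose k) * (of_int t * lam ^ m) ^ k) 0"
proof (cases "k = p")
  case True
  have "(m - 1) * (p - 1) \<ge> 1 * 2" using m p_ge_3 by (intro mult_mono) auto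
  hence "m * p - m - p + 1 \<ge> 2" by (simp add: algebra_simps diff_mult_distrib diff_mult_distrib2)
  hence "m * p \<ge> m + p" by linarith
  hence "lam ^ (m * p) = lam ^ (m + p) * lam ^ (m * p - (m + p))"
    by (simp add: power_add[symmetric])
  moreover have "of_nat (p choose k) * (of_int t * lam ^ m) ^ k = of_int t ^ p * lam ^ (m * p)"
    using True by (simp add: power_mult_distrib power_mult)
  ultimately show ?thesis by (intro lcong_0I[of "of_int t ^ p * lam ^ (m * p - (m + p))"]) auto
next
  case False
  hence k: "k < p" "k \<ge> 2" using k by auto
  hence "p dvd (p choose k)" using dvd_choose_prime prime_p by auto
  then obtain c where c: "p choose k = p * c" by (elim dvdE)
  have "m * k \<ge> m * 2" using k by simp
  hence "m * k \<ge> m + 1" using m by linarith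
  hence "(p - 1) + m * k = (m + p) + (m * k - m - 1)" using p_pos by simp
  hence "lam ^ (p - 1) * lam ^ (m * k) = lam ^ (m + p) * lam ^ (m * k - m - 1)"
    by (simp only: power_add[symmetric])
  moreover have "of_nat (p choose k) * (of_int t * lam ^ m) ^ k =
      of_nat p * of_nat c * (of_int t ^ k * lam ^ (m * k))"
    by (simp add: c power_mult_distrib power_mult)
  hence "of_nat (p choose k) * (of_int t * lam ^ m) ^ k =
      lam ^ (p - 1) * lam ^ (m * k) * (\<epsilon> * of_nat c * of_int t ^ k)"
    by (simp add: p_eq_lam_pow_eps mult_ac)
  ultimately have "of_nat (p choose k) * (of_int t * lam ^ m) ^ k =
      lam ^ (m + p) * (lam ^ (m * k - m - 1) * (\<epsilon> * of_nat c * of_int t ^ k))"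
    by (simp add: mult_ac)
  moreover have "lam ^ (m * k - m - 1) * (\<epsilon> * of_nat c * of_int t ^ k) \<in> ZZ"
    by (intro ZZ_mult ZZ_power) auto
  ultimately show ?thesis by (intro lcong_0I)
qed

lemma binomial_lcong:
  assumes m: "m \<ge> 2"
  shows "lcong (m + p) ((1 + of_int t * lam ^ m) ^ p) (1 + of_int t * \<epsilon> * lam ^ (m + p - 1))"
proof -
  define f where "f k = of_nat (p choose k) * (of_int t * lam ^ m) ^ k" for k
  have "{..p} = insert 0 (insert 1 {2..p})" using p_ge_3 by auto
  hence "(1 + of_int t * lam ^ m) ^ p = f 0 + f 1 + (\<Sum>k\<in>{2..p}. f k)"
    by (simp add: binomial_ring[of "of_int t * lam ^ m" 1, simplified add.commute] f_def)
  moreover have "f 0 + f 1 = 1 + of_int t * \<epsilon> * lam ^ (m + p - 1)"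
  proof -
    have "p - 1 + m = m + p - 1" using p_pos by simp
    hence "lam ^ (p - 1) * lam ^ m = lam ^ (m + p - 1)" by (simp only: power_add[symmetric])
    thus ?thesis by (simp add: f_def p_eq_lam_pow_eps mult_ac)
  qed
  moreover have "lcong (m + p) (\<Sum>k\<in>{2..p}. f k) 0"
    unfolding f_def using binomial_term_lcong[OF m] by (intro lcong_sum_0)
  hence "lcong (m + p) (f 0 + f 1 + (\<Sum>k\<in>{2..p}. f k)) (f 0 + f 1 + 0)" by (intro lcong_add) auto
  ultimately show ?thesis by simp
qed

text \<open>If \<open>u \<equiv> y\<^sup>p (mod \<lambda>\<^sup>k)\<close> with \<open>k > p\<close>, the correction \<open>y (1 + t \<lambda>\<^sup>k\<^sup>-\<^sup>p\<^sup>+\<^sup>1)\<close> changes \<open>y\<^sup>p\<close> by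
  \<open>t \<epsilon> y\<^sup>p \<lambda>\<^sup>k\<close> modulo \<open>\<lambda>\<^sup>k\<^sup>+\<^sup>1\<close>, and \<open>t\<close> can be chosen to cancel the error term.\<close>

lemma hensel_step:
  assumes k: "k \<ge> p + 1" and y: "y \<in> ZZ" and u: "u \<in> ZZ" "u' \<in> ZZ" "u * u' = 1"
    and cong: "lcong k u (y ^ p)"
  shows "\<exists>y'\<in>ZZ. lcong (k + 1) u (y' ^ p) \<and> lcong (k - p + 1) y' y"
proof -
  define m where "m = k - p + 1"
  obtain r where r: "r \<in> ZZ" "u - y ^ p = lam ^ k * r" using cong unfolding lcong_def by auto
  have "y ^ p * \<epsilon> \<in> ZZ" using y by auto
  moreover have "\<not> lcong 1 (y ^ p * \<epsilon>) 0"
  proof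
    assume "lcong 1 (y ^ p * \<epsilon>) 0"
    hence "lcong 1 (y ^ p * \<epsilon> * inverse \<epsilon>) (0 * inverse \<epsilon>)"
      using y by (intro lcong_mult) auto
    hence "lcong 1 (y ^ p) 0" using eps_neq_0 by (simp add: mult.assoc)
    moreover have "lcong 1 u (y ^ p)" using cong k lcong_mono[of k u "y ^ p" 1] by simp
    ultimately show False using unit_not_lcong_0[OF u] lcong_trans by blast
  qed
  ultimately obtain t where t: "lcong 1 r (y ^ p * \<epsilon> * of_int t)"
    using lcong_1_solve r(1) by blast
  define y' where "y' = y * (1 + of_int t * lam ^ m)"
  have "lcong (k + 1) ((1 + of_int t * lam ^ m) ^ p) (1 + of_int t * \<epsilon> * lam ^ k)"
    using binomial_lcong[of m t] k by (simp add: m_def)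
  hence "lcong (k + 1) (y ^ p * (1 + of_int t * lam ^ m) ^ p) (y ^ p * (1 + of_int t * \<epsilon> * lam ^ k))"
    using y by (intro lcong_mult[OF lcong_refl]) auto
  hence y'_power: "lcong (k + 1) (y' ^ p) (y ^ p * (1 + of_int t * \<epsilon> * lam ^ k))"
    by (simp add: y'_def power_mult_distrib)
  obtain q where q: "q \<in> ZZ" "r - y ^ p * \<epsilon> * of_int t = lam * q"
    using t unfolding lcong_def by auto
  have "u - y ^ p * (1 + of_int t * \<epsilon> * lam ^ k) = lam ^ k * (r - y ^ p * \<epsilon> * of_int t)"
    using r(2) by (simp add: algebra_simps)
  also have "\<dots> = lam ^ (k + 1) * q" using q(2) by (simp add: mult_ac)
  finally have "lcong (k + 1) u (y ^ p * (1 + of_int t * \<epsilon> * lam ^ k))"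
    unfolding lcong_def using q(1) by blast
  hence "lcong (k + 1) u (y' ^ p)" using y'_power lcong_sym lcong_trans by blast
  moreover have "y' - y = lam ^ m * (y * of_int t)" by (simp add: y'_def algebra_simps)
  hence "lcong m y' y" unfolding lcong_def using y by auto
  moreover have "y' \<in> ZZ" unfolding y'_def using y by (intro ZZ_mult ZZ_add ZZ_power) auto
  ultimately show ?thesis by (auto simp: m_def)
qed

lemma lcong_of_int_0_if_p2_dvd:
  assumes "int p ^ 2 dvd n"
  shows "lcong (p + 1) (of_int n) 0"
proof -
  obtain c where c: "n = int p ^ 2 * c" using assms by (elim dvdE)
  have "of_int n = (lam ^ (p - 1)) ^ 2 * (\<epsilon> ^ 2 * of_int c)"
    using c p_eq_lam_pow_eps by (simp add: power_mult_distrib mult_ac)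
  also have "(lam ^ (p - 1)) ^ 2 = lam ^ (2 * (p - 1))" by (simp only: mult.commute[of 2] power_mult)
  finally have "lcong (2 * (p - 1)) (of_int n) 0" by (intro lcong_0I[of "\<epsilon> ^ 2 * of_int c"]) auto
  thus ?thesis using p_ge_3 lcong_mono[of "2 * (p - 1)" "of_int n" 0 "p + 1"] by simp
qed

text \<open>Via \<open>u \<equiv> a' (mod p \<lambda>\<^sup>2)\<close> and \<open>a'\<^sup>p\<^sup>-\<^sup>1 \<equiv> 1 (mod p\<^sup>2)\<close>.\<close>

lemma unit_cong_int_mod_p_lcong_pth_power:
  assumes u: "u \<in> ZZ" "u' \<in> ZZ" "u * u' = 1"
    and w: "w \<in> ZZ" and uw: "u - of_int a = of_nat p * w"
  obtains a' where "lcong (p + 1) u (of_int a' ^ p)"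
proof -
  have "cnj u = u" by (rule unit_cong_int_mod_p_real[OF u w uw])
  then obtain a' s where s: "s \<in> ZZ" and us: "u - of_int a' = of_nat p * lam ^ 2 * s"
    using real_cong_mod_p_lam2 u(1) w uw by metis
  have "lam ^ (p - 1) * lam ^ 2 = lam ^ (p + 1)"
    using p_pos by (simp only: power_add[symmetric]) simp
  hence "u - of_int a' = lam ^ (p + 1) * (\<epsilon> * s)"
    using us p_eq_lam_pow_eps by (metis mult.assoc mult.commute)
  hence "lcong (p + 1) u (of_int a')" unfolding lcong_def using s by auto
  moreover have "a' ^ p - a' = a' * (a' ^ (p - 1) - 1)"
    using p_pos by (simp add: algebra_simps power_eq_if)
  hence "int p ^ 2 dvd a' ^ p - a'"
    using pow_p_minus_1_cong_1_mod_p2[OF u s us] by simp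
  hence "lcong (p + 1) (of_int (a' ^ p - a')) 0" by (rule lcong_of_int_0_if_p2_dvd)
  hence "lcong (p + 1) (of_int a' ^ p) (of_int a')" by (subst lcong_iff_diff) simp
  ultimately show ?thesis using that lcong_sym lcong_trans by blast
qed

lemma pth_root_approximations:
  assumes u: "u \<in> ZZ" "u' \<in> ZZ" "u * u' = 1"
    and y: "y \<in> ZZ" "lcong (p + 1) u (y ^ p)"
  obtains Y where "\<And>n. Y n \<in> ZZ" "\<And>n. lcong (p + 1 + n) u (Y n ^ p)"
    "\<And>n. lcong (n + 2) (Y (Suc n)) (Y n)"
proof -
  have "\<exists>Y. \<forall>n. (Y n \<in> ZZ \<and> lcong (p + 1 + n) u (Y n ^ p)) \<and> lcong (n + 2) (Y (Suc n)) (Y n)"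
  proof (rule dependent_nat_choice)
    show "\<exists>y. y \<in> ZZ \<and> lcong (p + 1 + 0) u (y ^ p)" using y by auto
    fix y n assume "y \<in> ZZ \<and> lcong (p + 1 + n) u (y ^ p)"
    hence "\<exists>y'\<in>ZZ. lcong (p + 1 + n + 1) u (y' ^ p) \<and> lcong (p + 1 + n - p + 1) y' y"
      using u by (intro hensel_step) auto
    thus "\<exists>y'. (y' \<in> ZZ \<and> lcong (p + 1 + Suc n) u (y' ^ p)) \<and> lcong (n + 2) y' y" by auto
  qed
  thus ?thesis using that by blast
qed

lemma lcong_telescope:
  assumes "\<And>n. lcong (n + 2) (Y (Suc n)) (Y n)"
  shows "lcong (n + 2) (Y (n + d)) (Y n)"
proof (induction d)
  case (Suc d)
  have "lcong (n + 2) (Y (Suc (n + d))) (Y (n + d))"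
    using assms[of "n + d"] by (rule lcong_mono) simp
  thus ?case using Suc lcong_trans by simp
qed simp

lemma o_elem_if_lcong:
  assumes "\<And>n. W n \<in> ZZ" "\<And>n. lcong (n * (p - 1)) (W (Suc n)) (W n)"
  shows "o_elem p W"
  unfolding o_elem_def using assms congZ_if_lcong by blast

text \<open>Since \<open>p = \<lambda>\<^sup>p\<^sup>-\<^sup>1 \<epsilon>\<close>, the subsequence \<open>Y (n (p - 1))\<close> is a compatible system modulo \<open>p\<^sup>n\<close>.\<close>

lemma o_pth_root_if_approximations:
  assumes u': "u' \<in> ZZ" "u * u' = 1"
    and Y: "\<And>n. Y n \<in> ZZ" "\<And>n. lcong (p + 1 + n) u (Y n ^ p)"
      "\<And>n. lcong (n + 2) (Y (Suc n)) (Y n)"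
  shows "\<exists>w. o_elem p w \<and> o_unit p w \<and> o_eq p (\<lambda>n. w n ^ p) (\<lambda>n. u)"
proof -
  define W where "W n = Y (n * (p - 1))" for n
  have W: "W n \<in> ZZ" for n unfolding W_def by (rule Y(1))
  have W_step: "lcong (n * (p - 1)) (W (Suc n)) (W n)" for n
  proof -
    have "lcong (n * (p - 1) + 2) (Y (n * (p - 1) + (p - 1))) (Y (n * (p - 1)))"
      by (rule lcong_telescope[OF Y(3)])
    hence "lcong (n * (p - 1)) (Y (n * (p - 1) + (p - 1))) (Y (n * (p - 1)))" by (rule lcong_mono) simp
    thus ?thesis unfolding W_def by (simp add: add.commute)
  qed
  have W_power: "lcong (n * (p - 1)) (W n ^ p) u" for n
  proof -
    have "lcong (n * (p - 1)) u (W n ^ p)" using Y(2)[of "n * (p - 1)"] unfolding W_def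
      by (rule lcong_mono) simp
    thus ?thesis by (rule lcong_sym)
  qed
  define V where "V n = W n ^ (p - 1) * u'" for n
  have "o_elem p V"
  proof (rule o_elem_if_lcong)
    show "V n \<in> ZZ" for n unfolding V_def using W u' by auto
    fix n
    have "lcong (n * (p - 1)) (W (Suc n) ^ (p - 1)) (W n ^ (p - 1))"
      using W_step W by (intro lcong_power) auto
    thus "lcong (n * (p - 1)) (V (Suc n)) (V n)" unfolding V_def using W u' by (intro lcong_mult) auto
  qed
  moreover have "o_eq p (\<lambda>n. W n * V n) (\<lambda>n. 1)" unfolding o_eq_def
  proof
    fix n
    have "W n * V n = W n ^ p * u'" unfolding V_def
      using power_Suc[of "W n" "p - 1"] Suc_diff_1[OF p_pos] by (simp add: mult.assoc)
    moreover have "lcong (n * (p - 1)) (W n ^ p * u') (u * u')"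
      using W_power W u' by (intro lcong_mult) auto
    ultimately show "congZ p (int p ^ n) (W n * V n) 1" using u'(2) by (simp add: congZ_if_lcong)
  qed
  ultimately have "o_unit p W" unfolding o_unit_def by blast
  moreover have "o_elem p W" using W W_step by (rule o_elem_if_lcong)
  moreover have "o_eq p (\<lambda>n. W n ^ p) (\<lambda>n. u)" unfolding o_eq_def
    using W_power congZ_if_lcong by blast
  ultimately show ?thesis by blast
qed

end

theorem proposition3:
  fixes p :: nat and u :: complex
  assumes "prime p" and "odd p"
    and "global_unit p u"
    and "\<exists>a. Zp_elem p a \<and> Zp_unit p a \<and>
           (\<exists>w. o_elem p w \<and> o_eq p (\<lambda>n. u - of_int (a n)) (\<lambda>n. of_nat p * w n))"
  shows "\<exists>w. o_elem p w \<and> o_unit p w \<and> o_eq p (\<lambda>n. w n ^ p) (\<lambda>n. u)"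
proof -
  interpret odd_prime p using assms(1,2) by unfold_locales
  obtain u' where u: "u \<in> Zz p" "u' \<in> Zz p" "u * u' = 1"
    using assms(3) unfolding global_unit_def by blast
  obtain a w0 where w0: "o_elem p w0" and eq: "o_eq p (\<lambda>n. u - of_int (a n)) (\<lambda>n. of_nat p * w0 n)"
    using assms(4) by blast
  have "congZ p (int p ^ 1) (u - of_int (a 1)) (of_nat p * w0 1)"
    using eq unfolding o_eq_def by blast
  then obtain W where W: "W \<in> Zz p" "u - of_int (a 1) - of_nat p * w0 1 = of_int (int p) * W"
    unfolding congZ_def by auto
  hence "u - of_int (a 1) = of_nat p * (w0 1 + W)" by (simp add: algebra_simps)
  moreover have "w0 1 + W \<in> Zz p" using w0 W unfolding o_elem_def by auto
  ultimately obtain a' where "lcong (p + 1) u (of_int a' ^ p)"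
    using unit_cong_int_mod_p_lcong_pth_power[OF u] by blast
  then obtain Y where "\<And>n. Y n \<in> Zz p" "\<And>n. lcong (p + 1 + n) u (Y n ^ p)"
      "\<And>n. lcong (n + 2) (Y (Suc n)) (Y n)"
    using pth_root_approximations[OF u ZZ_of_int] by blast
  thus ?thesis using o_pth_root_if_approximations[OF u(2,3)] by blast
qed

end
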